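(* Let $T_n$ be a tree with $n$ nodes, rooted at $r$, with depth $l_{\max}$, and let $k$ initial messages be located at some nodes of the tree. Consider the algebraic gossip \texttt{EXCHANGE} protocol in which the communication partner of every non-root node is fixed to be its parent in $T_n$ throughout the protocol. Then the time needed for all nodes to learn all $k$ messages is $O(k+\log n+l_{\max})$ rounds with probability at least $1-\tfrac{2}{n}$, in both the synchronous and the asynchronous time model.
   Context: Asynchronous time model: each timeslot one node chosen independently and uniformly at random acts; $n$ timeslots form a round. Synchronous time model: in each round every node acts; information received in a round can be sent only from the next round. When a node acts it performs \texttt{EXCHANGE} with its partner: both send a message to each other. Algebraic gossip: the $k$ initial messages $x_1,\dots,x_k\in\mathbb{F}_q^r$ ($q\ge2$); nodes store linear equations over $\mathbb{F}_q$ in the unknowns $x_i$ (initially those of the messages they hold); a sent message is a random linear combination of the sender's stored equations with coefficients uniform in $\mathbb{F}_q$; a received equation is stored iff it is linearly independent of the stored ones; a node learns all messages when its rank reaches $k$. *)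

theory Defs
  imports "HOL-Algebra.Ring" "HOL-Probability.Probability_Mass_Function"
begin

text \<open>A linear equation in the unknowns x_1..x_k is identified with its coefficient
vector, a list of length k of elements of the field R.\<close>

definition vzero :: "nat ring \<Rightarrow> nat \<Rightarrow> nat list" where
  "vzero R k = replicate k \<zero>\<^bsub>R\<^esub>"

definition unitv :: "nat ring \<Rightarrow> nat \<Rightarrow> nat \<Rightarrow> nat list" where
  "unitv R k i = map (\<lambda>j. if j = i then \<one>\<^bsub>R\<^esub> else \<zero>\<^bsub>R\<^esub>) [0..<k]"

definition vadd :: "nat ring \<Rightarrow> nat list \<Rightarrow> nat list \<Rightarrow> nat list" where
  "vadd R u v = map2 (\<lambda>a b. a \<oplus>\<^bsub>R\<^esub> b) u v"

definition vsmult :: "nat ring \<Rightarrow> nat \<Rightarrow> nat list \<Rightarrow> nat list" where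
  "vsmult R c v = map (\<lambda>a. c \<otimes>\<^bsub>R\<^esub> a) v"

definition lincomb :: "nat ring \<Rightarrow> nat \<Rightarrow> nat list \<Rightarrow> nat list list \<Rightarrow> nat list" where
  "lincomb R k cs S = foldr (\<lambda>(c, e) acc. vadd R (vsmult R c e) acc) (zip cs S) (vzero R k)"

definition in_span :: "nat ring \<Rightarrow> nat \<Rightarrow> nat list list \<Rightarrow> nat list \<Rightarrow> bool" where
  "in_span R k S v \<longleftrightarrow>
     (\<exists>cs. length cs = length S \<and> set cs \<subseteq> carrier R \<and> v = lincomb R k cs S)"

definition store :: "nat ring \<Rightarrow> nat \<Rightarrow> nat list list \<Rightarrow> nat list \<Rightarrow> nat list list" where
  "store R k S v = (if in_span R k S v then S else S @ [v])"

primrec rand_comb :: "nat ring \<Rightarrow> nat \<Rightarrow> nat list list \<Rightarrow> nat list pmf" where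
  "rand_comb R k [] = return_pmf (vzero R k)"
| "rand_comb R k (e # es) =
     bind_pmf (pmf_of_set (carrier R)) (\<lambda>c.
     bind_pmf (rand_comb R k es) (\<lambda>v. return_pmf (vadd R (vsmult R c e) v)))"

text \<open>A node has learned all messages when every x_i is decodable, i.e. rank k.\<close>
definition learned_all :: "nat ring \<Rightarrow> nat \<Rightarrow> nat list list \<Rightarrow> bool" where
  "learned_all R k S \<longleftrightarrow> (\<forall>i<k. in_span R k S (unitv R k i))"

type_synonym gstate = "nat \<Rightarrow> nat list list"

definition all_learned :: "nat ring \<Rightarrow> nat \<Rightarrow> nat \<Rightarrow> gstate \<Rightarrow> bool" where
  "all_learned R k n st \<longleftrightarrow> (\<forall>v<n. learned_all R k (st v))"

definition init_state :: "nat ring \<Rightarrow> nat \<Rightarrow> (nat \<Rightarrow> nat) \<Rightarrow> gstate" where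
  "init_state R k loc = (\<lambda>w. [unitv R k i. i \<leftarrow> [0..<k], loc i = w])"

definition is_rooted_tree :: "nat \<Rightarrow> nat \<Rightarrow> (nat \<Rightarrow> nat) \<Rightarrow> bool" where
  "is_rooted_tree n r par \<longleftrightarrow> r < n \<and> (\<forall>v<n. v \<noteq> r \<longrightarrow> par v < n)
     \<and> (\<forall>v<n. \<exists>m. (par ^^ m) v = r)"

definition depth :: "(nat \<Rightarrow> nat) \<Rightarrow> nat \<Rightarrow> nat \<Rightarrow> nat" where
  "depth par r v = (LEAST m. (par ^^ m) v = r)"

definition lmax :: "nat \<Rightarrow> nat \<Rightarrow> (nat \<Rightarrow> nat) \<Rightarrow> nat" where
  "lmax n r par = Max (depth par r ` {..<n})"

definition exchange :: "nat ring \<Rightarrow> nat \<Rightarrow> nat \<Rightarrow> nat \<Rightarrow> gstate \<Rightarrow> gstate pmf" where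
  "exchange R k u p st =
     bind_pmf (rand_comb R k (st u)) (\<lambda>a.
     bind_pmf (rand_comb R k (st p)) (\<lambda>b.
     return_pmf (st(p := store R k (st p) a, u := store R k (st u) b))))"

definition async_step :: "nat ring \<Rightarrow> nat \<Rightarrow> nat \<Rightarrow> nat \<Rightarrow> (nat \<Rightarrow> nat) \<Rightarrow> gstate \<Rightarrow> gstate pmf" where
  "async_step R k n r par st =
     bind_pmf (pmf_of_set {..<n}) (\<lambda>v. if v = r then return_pmf st else exchange R k v (par v) st)"

primrec pmf_seq :: "'a pmf list \<Rightarrow> 'a list pmf" where
  "pmf_seq [] = return_pmf []"
| "pmf_seq (p # ps) = bind_pmf p (\<lambda>x. bind_pmf (pmf_seq ps) (\<lambda>xs. return_pmf (x # xs)))"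

text \<open>Synchronous round: every non-root node v performs EXCHANGE with par v; all
messages are computed from the states at the beginning of the round (independent
coefficients for every message), and are stored at the end of the round.\<close>
definition sync_step :: "nat ring \<Rightarrow> nat \<Rightarrow> nat \<Rightarrow> nat \<Rightarrow> (nat \<Rightarrow> nat) \<Rightarrow> gstate \<Rightarrow> gstate pmf" where
  "sync_step R k n r par st =
     bind_pmf (pmf_seq (map (\<lambda>v. pair_pmf (rand_comb R k (st v)) (rand_comb R k (st (par v)))) [0..<n]))
       (\<lambda>msgs. return_pmf (\<lambda>w. if w < n then
          fold (\<lambda>e S. store R k S e)
            ([fst (msgs ! v). v \<leftarrow> [0..<n], v \<noteq> r, par v = w]
             @ (if w \<noteq> r then [snd (msgs ! w)] else []))
            (st w)
        else st w))"

primrec pmf_iter :: "('a \<Rightarrow> 'a pmf) \<Rightarrow> nat \<Rightarrow> 'a \<Rightarrow> 'a pmf" where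
  "pmf_iter f 0 s = return_pmf s"
| "pmf_iter f (Suc t) s = bind_pmf (pmf_iter f t s) f"

end

theory Submission
  imports Defs
begin

text \<open>Call a nonzero functional \<open>\<mu>\<close> on \<open>\<bbbF>\<^sub>q\<^sup>k\<close> known at a node if some stored equation is not
  orthogonal to \<open>\<mu>\<close>; by Gaussian elimination a node has rank \<open>k\<close> iff it knows every \<open>\<mu>\<close>.
  A random combination of equations of which one is not orthogonal to \<open>\<mu>\<close> is orthogonal
  to \<open>\<mu>\<close> with probability at most \<open>1/q\<close>, so every EXCHANGE over a tree edge hands on the
  knowledge of \<open>\<mu>\<close> with probability at least \<open>1 - 1/q\<close>.

  Fix \<open>\<mu>\<close> and a target \<open>w\<close>. Some node \<open>s\<close> initially holding a message with a nonzero
  coefficient in \<open>\<mu>\<close> knows \<open>\<mu>\<close>, and knowledge has to travel along the walk from \<open>s\<close> up to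
  the root and down to \<open>w\<close>, of length \<open>L \<le> 2 l\<^sub>m\<^sub>a\<^sub>x\<close>. Along this walk
  \<open>4 ^ (L - progress) * \<theta> ^ m\<close> with \<open>\<theta> = 4/(3q)\<close> is a supermartingale, so the walk is
  incomplete after \<open>L + m\<close> rounds with probability at most \<open>16 ^ l\<^sub>m\<^sub>a\<^sub>x * \<theta> ^ m\<close>.
  Asynchronously, the node that must act is activated in each timeslot with probability
  \<open>1/n\<close>, and a potential argument of the same shape bounds the probability that \<open>T n\<close>
  timeslots offer too few activations. A union bound over the \<open>q ^ k\<close> functionals and \<open>n\<close>
  targets with \<open>m = \<Theta>(k + log n + l\<^sub>m\<^sub>a\<^sub>x)\<close> finishes the proof.\<close>

section \<open>Linear algebra of stored equations\<close>

definition is_vec :: "nat ring \<Rightarrow> nat \<Rightarrow> nat list \<Rightarrow> bool" where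
  "is_vec R k v \<longleftrightarrow> length v = k \<and> set v \<subseteq> carrier R"

fun dot :: "nat ring \<Rightarrow> nat list \<Rightarrow> nat list \<Rightarrow> nat" where
  "dot R (a # as) (b # bs) = a \<otimes>\<^bsub>R\<^esub> b \<oplus>\<^bsub>R\<^esub> dot R as bs"
| "dot R _ _ = \<zero>\<^bsub>R\<^esub>"

text \<open>Node knowledge of a functional \<open>\<mu>\<close>, in the sense of Haeupler's analysis of network coding.\<close>
definition knows :: "nat ring \<Rightarrow> nat list \<Rightarrow> nat list list \<Rightarrow> bool" where
  "knows R \<mu> S \<longleftrightarrow> (\<exists>s\<in>set S. dot R \<mu> s \<noteq> \<zero>\<^bsub>R\<^esub>)"

definition is_vec_list :: "nat ring \<Rightarrow> nat \<Rightarrow> nat list list \<Rightarrow> bool" where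
  "is_vec_list R k S \<longleftrightarrow> (\<forall>s\<in>set S. is_vec R k s)"

locale nat_field = field R for R :: "nat ring" (structure)

context nat_field
begin

lemma is_vec_Cons[simp]: "is_vec R (Suc k) (a # v) \<longleftrightarrow> a \<in> carrier R \<and> is_vec R k v"
  by (auto simp: is_vec_def)

lemma is_vec_0[simp]: "is_vec R 0 v \<longleftrightarrow> v = []"
  by (auto simp: is_vec_def)

lemma is_vec_nth: "is_vec R k v \<Longrightarrow> i < k \<Longrightarrow> v ! i \<in> carrier R"
  by (auto simp: is_vec_def)

lemma length_vadd[simp]: "length (vadd R u v) = min (length u) (length v)"
  by (simp add: vadd_def)

lemma nth_vadd[simp]: "i < length u \<Longrightarrow> i < length v \<Longrightarrow> vadd R u v ! i = u ! i \<oplus> v ! i"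
  by (simp add: vadd_def)

lemma length_vsmult[simp]: "length (vsmult R c v) = length v"
  by (simp add: vsmult_def)

lemma nth_vsmult[simp]: "i < length v \<Longrightarrow> vsmult R c v ! i = c \<otimes> v ! i"
  by (simp add: vsmult_def)

lemma length_vzero[simp]: "length (vzero R k) = k"
  by (simp add: vzero_def)

lemma nth_vzero[simp]: "i < k \<Longrightarrow> vzero R k ! i = \<zero>"
  by (simp add: vzero_def)

lemma vadd_Cons[simp]: "vadd R (a # u) (b # v) = (a \<oplus> b) # vadd R u v"
  by (simp add: vadd_def)

lemma vsmult_Cons[simp]: "vsmult R c (a # u) = (c \<otimes> a) # vsmult R c u"
  by (simp add: vsmult_def)

lemma vzero_Suc[simp]: "vzero R (Suc k) = \<zero> # vzero R k"
  by (simp add: vzero_def)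

lemma is_vec_vadd[intro]: "is_vec R k u \<Longrightarrow> is_vec R k v \<Longrightarrow> is_vec R k (vadd R u v)"
proof -
  assume a: "is_vec R k u" "is_vec R k v"
  have "x \<in> carrier R" if "x \<in> set (vadd R u v)" for x
  proof -
    from that a obtain i where i: "i < k" "x = vadd R u v ! i" by (auto simp: in_set_conv_nth is_vec_def)
    then have "x = u ! i \<oplus> v ! i" using a by (simp add: is_vec_def)
    moreover have "u ! i \<in> carrier R" "v ! i \<in> carrier R" using a i by (auto simp: is_vec_def)
    ultimately show "x \<in> carrier R" by simp
  qed
  then show ?thesis using a by (auto simp: is_vec_def)
qed

lemma is_vec_vsmult[intro]: "c \<in> carrier R \<Longrightarrow> is_vec R k v \<Longrightarrow> is_vec R k (vsmult R c v)"
  unfolding is_vec_def vsmult_def by auto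

lemma is_vec_vzero[intro]: "is_vec R k (vzero R k)"
  unfolding is_vec_def vzero_def by auto

lemma is_vec_unitv[intro]: "is_vec R k (unitv R k i)"
  unfolding is_vec_def unitv_def by auto

lemma dot_carrier[intro]: "set \<mu> \<subseteq> carrier R \<Longrightarrow> set v \<subseteq> carrier R \<Longrightarrow> dot R \<mu> v \<in> carrier R"
proof (induction \<mu> arbitrary: v)
  case Nil then show ?case by simp
next
  case (Cons a as) then show ?case by (cases v) auto
qed

lemma dot_vadd: "is_vec R k \<mu> \<Longrightarrow> is_vec R k u \<Longrightarrow> is_vec R k v \<Longrightarrow>
    dot R \<mu> (vadd R u v) = dot R \<mu> u \<oplus> dot R \<mu> v"
proof (induction k arbitrary: \<mu> u v)
  case 0 then show ?case by simp
next
  case (Suc k)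
  then obtain m ms a as b bs where e: "\<mu> = m # ms" "u = a # as" "v = b # bs"
    by (metis length_Suc_conv is_vec_def)
  have c: "m \<in> carrier R" "a \<in> carrier R" "b \<in> carrier R"
    "dot R ms as \<in> carrier R" "dot R ms bs \<in> carrier R"
    using Suc.prems e by (auto simp: is_vec_def)
  have IH: "dot R ms (vadd R as bs) = dot R ms as \<oplus> dot R ms bs"
    using Suc e by simp
  show ?case using c by (simp add: e IH r_distr a_ac)
qed

lemma dot_vsmult: "c \<in> carrier R \<Longrightarrow> is_vec R k \<mu> \<Longrightarrow> is_vec R k v \<Longrightarrow>
    dot R \<mu> (vsmult R c v) = c \<otimes> dot R \<mu> v"
proof (induction k arbitrary: \<mu> v)
  case 0 then show ?case by simp
next
  case (Suc k)
  then obtain m ms a as where e: "\<mu> = m # ms" "v = a # as"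
    by (metis length_Suc_conv is_vec_def)
  have c: "m \<in> carrier R" "a \<in> carrier R" "dot R ms as \<in> carrier R"
    using Suc.prems e by (auto simp: is_vec_def)
  have IH: "dot R ms (vsmult R c as) = c \<otimes> dot R ms as"
    using Suc e by simp
  show ?case using c Suc.prems(1) by (simp add: e IH r_distr m_ac)
qed

lemma dot_vzero: "is_vec R k \<mu> \<Longrightarrow> dot R \<mu> (vzero R k) = \<zero>"
proof (induction k arbitrary: \<mu>)
  case 0 then show ?case by simp
next
  case (Suc k)
  then obtain m ms where e: "\<mu> = m # ms" by (metis length_Suc_conv is_vec_def)
  then show ?case using Suc by simp
qed

lemma dot_unitv: "is_vec R k \<mu> \<Longrightarrow> i < k \<Longrightarrow> dot R \<mu> (unitv R k i) = \<mu> ! i"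
proof -
  have "\<And>\<mu> j. is_vec R m \<mu> \<Longrightarrow> dot R \<mu> (map (\<lambda>x. if x = i then \<one> else \<zero>) [j..<j+m])
        = (if j \<le> i \<and> i < j + m then \<mu> ! (i - j) else \<zero>)" for m
  proof (induction m)
    case 0 then show ?case by simp
  next
    case (Suc m)
    then obtain a as where e: "\<mu> = a # as" by (metis length_Suc_conv is_vec_def)
    have eq: "[j..<j + Suc m] = j # [Suc j..<Suc j + m]" by (simp add: upt_conv_Cons del: upt_Suc)
    have IH: "dot R as (map (\<lambda>x. if x = i then \<one> else \<zero>) [Suc j..<Suc j + m]) =
       (if Suc j \<le> i \<and> i < Suc j + m then as ! (i - Suc j) else \<zero>)"
      by (rule Suc.IH) (use Suc.prems e in simp)
    have ca: "a \<in> carrier R" using Suc.prems e by auto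
    have cas: "as ! (i - Suc j) \<in> carrier R" if "Suc j \<le> i" "i < Suc j + m"
      using Suc.prems e that by (auto simp: is_vec_def)
    have "dot R \<mu> (map (\<lambda>x. if x = i then \<one> else \<zero>) [j..<j+Suc m]) =
       (a \<otimes> (if j = i then \<one> else \<zero>)) \<oplus> (if Suc j \<le> i \<and> i < Suc j + m then as ! (i - Suc j) else \<zero>)"
      by (simp only: eq list.map dot.simps IH e)
    also have "\<dots> = (if j \<le> i \<and> i < j + Suc m then \<mu> ! (i - j) else \<zero>)"
    proof -
      consider "j = i" | "j < i" | "i < j" by linarith
      then show ?thesis
      proof cases
        case 1 then show ?thesis using ca e by simp
      next
        case 2
        then have "i - j = Suc (i - Suc j)" by simp
        then have "\<mu> ! (i - j) = as ! (i - Suc j)" using e by simp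
        then show ?thesis using 2 cas ca by auto
      next
        case 3 then show ?thesis using ca by auto
      qed
    qed
    finally show ?case .
  qed
  from this[of k \<mu> 0] show "is_vec R k \<mu> \<Longrightarrow> i < k \<Longrightarrow> ?thesis" by (simp add: unitv_def)
qed

lemma lincomb_Nil[simp]: "lincomb R k cs [] = vzero R k" "lincomb R k [] S = vzero R k"
  by (simp_all add: lincomb_def)

lemma lincomb_Cons[simp]: "lincomb R k (c # cs) (e # S) = vadd R (vsmult R c e) (lincomb R k cs S)"
  by (simp add: lincomb_def)

lemma is_vec_lincomb[intro]: "set cs \<subseteq> carrier R \<Longrightarrow> is_vec_list R k S \<Longrightarrow> is_vec R k (lincomb R k cs S)"
proof (induction S arbitrary: cs)
  case Nil then show ?case by auto
next
  case (Cons e S) then show ?case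
    by (cases cs) (auto simp: is_vec_list_def)
qed

lemma dot_lincomb_zero: "is_vec R k \<mu> \<Longrightarrow> is_vec_list R k S \<Longrightarrow> set cs \<subseteq> carrier R \<Longrightarrow>
   (\<forall>s\<in>set S. dot R \<mu> s = \<zero>) \<Longrightarrow> dot R \<mu> (lincomb R k cs S) = \<zero>"
proof (induction S arbitrary: cs)
  case Nil then show ?case by (simp add: dot_vzero)
next
  case (Cons e S) then show ?case
    by (cases cs) (auto simp: is_vec_list_def dot_vzero dot_vadd dot_vsmult is_vec_lincomb is_vec_vsmult)
qed

lemma knows_in_span: "is_vec R k \<mu> \<Longrightarrow> is_vec_list R k S \<Longrightarrow> in_span R k S v \<Longrightarrow> dot R \<mu> v \<noteq> \<zero> \<Longrightarrow> knows R \<mu> S"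
  unfolding in_span_def knows_def using dot_lincomb_zero by blast

lemma knows_store: "is_vec R k \<mu> \<Longrightarrow> is_vec_list R k S \<Longrightarrow> dot R \<mu> v \<noteq> \<zero> \<Longrightarrow> knows R \<mu> (store R k S v)"
  unfolding store_def using knows_in_span by (auto simp: knows_def)

lemma knows_store_mono: "knows R \<mu> S \<Longrightarrow> knows R \<mu> (store R k S v)"
  unfolding store_def knows_def by auto

lemma is_vec_list_store: "is_vec_list R k S \<Longrightarrow> is_vec R k v \<Longrightarrow> is_vec_list R k (store R k S v)"
  unfolding store_def is_vec_list_def by auto

end

inductive_set span_set :: "nat ring \<Rightarrow> nat \<Rightarrow> nat list list \<Rightarrow> nat list set" for R k S where
  zero: "vzero R k \<in> span_set R k S"
| elem: "s \<in> set S \<Longrightarrow> s \<in> span_set R k S"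
| add: "u \<in> span_set R k S \<Longrightarrow> v \<in> span_set R k S \<Longrightarrow> vadd R u v \<in> span_set R k S"
| smult: "c \<in> carrier R \<Longrightarrow> u \<in> span_set R k S \<Longrightarrow> vsmult R c u \<in> span_set R k S"

context nat_field
begin

lemma list_eq_by_nth: "length u = k \<Longrightarrow> length v = k \<Longrightarrow> (\<And>i. i < k \<Longrightarrow> u ! i = v ! i) \<Longrightarrow> u = v"
  by (auto intro: nth_equalityI)

lemma is_vec_length: "is_vec R k v \<Longrightarrow> length v = k"
  by (simp add: is_vec_def)

lemma vsmult_zero: "is_vec R k e \<Longrightarrow> vsmult R \<zero> e = vzero R k"
  by (rule list_eq_by_nth[of _ k]) (auto simp: is_vec_length is_vec_nth)

lemma vsmult_one: "is_vec R k e \<Longrightarrow> vsmult R \<one> e = e"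
  by (rule list_eq_by_nth[of _ k]) (auto simp: is_vec_length is_vec_nth)

lemma vadd_zero_left: "is_vec R k e \<Longrightarrow> vadd R (vzero R k) e = e"
  by (rule list_eq_by_nth[of _ k]) (auto simp: is_vec_length is_vec_nth)

lemma vadd_zero_right: "is_vec R k e \<Longrightarrow> vadd R e (vzero R k) = e"
  by (rule list_eq_by_nth[of _ k]) (auto simp: is_vec_length is_vec_nth)

lemma vsmult_vzero: "c \<in> carrier R \<Longrightarrow> vsmult R c (vzero R k) = vzero R k"
  by (rule list_eq_by_nth[of _ k]) auto

lemma lincomb_zero: "is_vec_list R k S \<Longrightarrow> lincomb R k (replicate (length S) \<zero>) S = vzero R k"
  by (induction S) (auto simp: is_vec_list_def vsmult_zero vadd_zero_left is_vec_vzero)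

lemma in_span_zero: "is_vec_list R k S \<Longrightarrow> in_span R k S (vzero R k)"
  unfolding in_span_def
  by (rule exI[of _ "replicate (length S) \<zero>"]) (auto simp: lincomb_zero)

lemma in_span_elem: "is_vec_list R k S \<Longrightarrow> s \<in> set S \<Longrightarrow> in_span R k S s"
proof (induction S)
  case Nil then show ?case by simp
next
  case (Cons e S)
  have we: "is_vec R k e" and wS: "is_vec_list R k S" using Cons.prems by (auto simp: is_vec_list_def)
  show ?case
  proof (cases "s = e")
    case True
    have "lincomb R k (\<one> # replicate (length S) \<zero>) (e # S) = e"
      using we wS by (simp add: lincomb_zero vsmult_one vadd_zero_right)
    then show ?thesis unfolding in_span_def True
      by (intro exI[of _ "\<one> # replicate (length S) \<zero>"]) auto
  next
    case False
    then have "in_span R k S s" using Cons wS by auto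
    then obtain cs where cs: "length cs = length S" "set cs \<subseteq> carrier R" "s = lincomb R k cs S"
      unfolding in_span_def by blast
    have "lincomb R k (\<zero> # cs) (e # S) = s"
      using we wS cs by (simp add: vsmult_zero vadd_zero_left is_vec_lincomb)
    then show ?thesis unfolding in_span_def
      using cs by (intro exI[of _ "\<zero> # cs"]) auto
  qed
qed

lemma lincomb_add: "is_vec_list R k S \<Longrightarrow> length cs = length S \<Longrightarrow> length ds = length S \<Longrightarrow>
  set cs \<subseteq> carrier R \<Longrightarrow> set ds \<subseteq> carrier R \<Longrightarrow>
  lincomb R k (map2 (\<oplus>) cs ds) S = vadd R (lincomb R k cs S) (lincomb R k ds S)"
proof (induction S arbitrary: cs ds)
  case Nil then show ?case by (simp add: vadd_zero_left is_vec_vzero)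
next
  case (Cons e S)
  obtain c cs' where c: "cs = c # cs'" using Cons.prems by (cases cs) auto
  obtain d ds' where d: "ds = d # ds'" using Cons.prems by (cases ds) auto
  have we: "is_vec R k e" and wS: "is_vec_list R k S" using Cons.prems by (auto simp: is_vec_list_def)
  have cc: "c \<in> carrier R" "d \<in> carrier R" "set cs' \<subseteq> carrier R" "set ds' \<subseteq> carrier R"
    using Cons.prems c d by auto
  have IH: "lincomb R k (map2 (\<oplus>) cs' ds') S = vadd R (lincomb R k cs' S) (lincomb R k ds' S)"
    using Cons c d wS by auto
  have w1: "is_vec R k (lincomb R k cs' S)" "is_vec R k (lincomb R k ds' S)"
    using cc wS by auto
  show ?case
    unfolding c d
    apply (simp add: IH)
    apply (rule list_eq_by_nth[of _ k])
    using we w1 cc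
    by (auto simp: is_vec_length is_vec_nth l_distr a_ac)
qed

lemma lincomb_smult: "is_vec_list R k S \<Longrightarrow> length cs = length S \<Longrightarrow>
  set cs \<subseteq> carrier R \<Longrightarrow> c \<in> carrier R \<Longrightarrow>
  lincomb R k (map ((\<otimes>) c) cs) S = vsmult R c (lincomb R k cs S)"
proof (induction S arbitrary: cs)
  case Nil then show ?case by (simp add: vsmult_vzero)
next
  case (Cons e S)
  obtain d cs' where d: "cs = d # cs'" using Cons.prems by (cases cs) auto
  have we: "is_vec R k e" and wS: "is_vec_list R k S" using Cons.prems by (auto simp: is_vec_list_def)
  have cc: "d \<in> carrier R" "set cs' \<subseteq> carrier R"
    using Cons.prems d by auto
  have IH: "lincomb R k (map ((\<otimes>) c) cs') S = vsmult R c (lincomb R k cs' S)"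
    using Cons d wS by auto
  have w1: "is_vec R k (lincomb R k cs' S)" using cc wS by auto
  show ?case
    unfolding d
    apply (simp add: IH)
    apply (rule list_eq_by_nth[of _ k])
    using we w1 cc Cons.prems(4)
    by (auto simp: is_vec_length is_vec_nth r_distr m_ac)
qed

lemma span_set_imp_in_span: assumes wS: "is_vec_list R k S" shows "v \<in> span_set R k S \<Longrightarrow> in_span R k S v"
proof (induction v rule: span_set.induct)
  case zero then show ?case using wS by (rule in_span_zero)
next
  case (elem s) then show ?case using wS by (simp add: in_span_elem)
next
  case (add u v)
  then obtain cs ds where "length cs = length S" "set cs \<subseteq> carrier R" "u = lincomb R k cs S"
    "length ds = length S" "set ds \<subseteq> carrier R" "v = lincomb R k ds S"
    unfolding in_span_def by auto
  then show ?case unfolding in_span_def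
    using wS
    by (intro exI[of _ "map2 (\<oplus>) cs ds"]) (auto simp: lincomb_add set_zip intro!: add.m_closed nth_mem[THEN subsetD[rotated]])
next
  case (smult c u)
  then obtain cs where "length cs = length S" "set cs \<subseteq> carrier R" "u = lincomb R k cs S"
    unfolding in_span_def by auto
  then show ?case unfolding in_span_def
    using smult wS
    by (intro exI[of _ "map ((\<otimes>) c) cs"]) (auto simp: lincomb_smult)
qed

lemma dot_vzero_left: "is_vec R k t \<Longrightarrow> dot R (vzero R k) t = \<zero>"
proof (induction k arbitrary: t)
  case 0 then show ?case by simp
next
  case (Suc k)
  then obtain a as where "t = a # as" by (metis length_Suc_conv is_vec_def)
  then show ?case using Suc by simp
qed

lemma is_vec_SucE: assumes "is_vec R (Suc k) v" obtains a as where "v = a # as" "a \<in> carrier R" "is_vec R k as"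
  using assms by (metis length_Suc_conv is_vec_def is_vec_Cons)

end

definition eliminate :: "nat ring \<Rightarrow> nat \<Rightarrow> nat list \<Rightarrow> nat list \<Rightarrow> nat list" where
  "eliminate R h t s = vadd R (tl s) (vsmult R (\<ominus>\<^bsub>R\<^esub> (hd s \<otimes>\<^bsub>R\<^esub> inv\<^bsub>R\<^esub> h)) t)"

context nat_field
begin

lemma inv_pivot: "h \<in> carrier R \<Longrightarrow> h \<noteq> \<zero> \<Longrightarrow> inv h \<in> carrier R \<and> inv h \<otimes> h = \<one>"
  using field_Units by auto

context
  fixes h :: nat and t :: "nat list" and k :: nat
  assumes h: "h \<in> carrier R" "h \<noteq> \<zero>" and t: "is_vec R k t"
begin

lemma is_vec_eliminate: "is_vec R (Suc k) s \<Longrightarrow> is_vec R k (eliminate R h t s)"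
  using t inv_pivot[OF h] by (elim is_vec_SucE) (auto simp: eliminate_def)

lemma dot_eliminate:
  assumes "is_vec R k \<mu>'" "is_vec R (Suc k) s"
  shows "dot R \<mu>' (eliminate R h t s) = dot R ((\<ominus> (dot R \<mu>' t \<otimes> inv h)) # \<mu>') s"
proof -
  obtain a as where as: "s = a # as" "a \<in> carrier R" "is_vec R k as"
    using assms(2) by (rule is_vec_SucE)
  have d: "dot R \<mu>' t \<in> carrier R" "dot R \<mu>' as \<in> carrier R"
    using assms(1) t as by (auto simp: is_vec_def)
  have c: "\<ominus> (a \<otimes> inv h) \<in> carrier R" using as inv_pivot[OF h] by simp
  then have "dot R \<mu>' (eliminate R h t s) = dot R \<mu>' as \<oplus> (\<ominus> (a \<otimes> inv h)) \<otimes> dot R \<mu>' t"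
    using as t assms(1) by (simp add: eliminate_def dot_vadd[of k] dot_vsmult[of _ k] is_vec_vsmult)
  also have "\<dots> = (\<ominus> (dot R \<mu>' t \<otimes> inv h)) \<otimes> a \<oplus> dot R \<mu>' as"
    using as d inv_pivot[OF h] by (simp add: l_minus r_minus m_ac a_comm)
  finally show ?thesis using as by simp
qed

lemma Cons_zero_span_set_eliminate:
  assumes S: "is_vec_list R (Suc k) S" and pivot: "h # t \<in> set S"
    and y: "y \<in> span_set R k (map (eliminate R h t) S)"
  shows "\<zero> # y \<in> span_set R (Suc k) S"
  using y
proof (induction y rule: span_set.induct)
  case zero
  have "\<zero> # vzero R k = vzero R (Suc k)" by simp
  then show ?case using span_set.zero by metis
next
  case (elem y)
  then obtain s where s: "s \<in> set S" "y = eliminate R h t s" by auto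
  have "is_vec R (Suc k) s" using s S by (auto simp: is_vec_list_def)
  then obtain a as where as: "s = a # as" "a \<in> carrier R" "is_vec R k as" by (rule is_vec_SucE)
  have "a \<oplus> \<ominus> (a \<otimes> inv h) \<otimes> h = \<zero>"
    using as inv_pivot[OF h] h by (simp add: l_minus m_assoc r_neg)
  then have "vadd R s (vsmult R (\<ominus> (a \<otimes> inv h)) (h # t)) = \<zero> # y"
    using s as by (simp add: eliminate_def)
  moreover have "vadd R s (vsmult R (\<ominus> (a \<otimes> inv h)) (h # t)) \<in> span_set R (Suc k) S"
    using s pivot as inv_pivot[OF h] by (intro span_set.add span_set.elem span_set.smult) auto
  ultimately show ?case by simp
next
  case (add u v)
  have "\<zero> # vadd R u v = vadd R (\<zero> # u) (\<zero> # v)" by simp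
  then show ?case using add span_set.add by metis
next
  case (smult c u)
  have "\<zero> # vsmult R c u = vsmult R c (\<zero> # u)" using smult by simp
  then show ?case using smult span_set.smult by metis
qed

lemma pivot_decompose:
  assumes "is_vec R (Suc k) v"
  obtains d y where "d \<in> carrier R" "is_vec R k y" "v = vadd R (vsmult R d (h # t)) (\<zero> # y)"
proof -
  obtain a vs where av: "v = a # vs" "a \<in> carrier R" "is_vec R k vs"
    using assms by (rule is_vec_SucE)
  define d where "d = a \<otimes> inv h"
  have dc: "d \<in> carrier R" using av inv_pivot[OF h] by (simp add: d_def)
  define y where "y = vadd R vs (vsmult R (\<ominus> d) t)"
  have wy: "is_vec R k y" using av t dc by (auto simp: y_def)
  have "d \<otimes> h \<oplus> \<zero> = a" using av inv_pivot[OF h] h by (simp add: d_def m_assoc)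
  moreover have "vadd R (vsmult R d t) y = vs"
    by (rule list_eq_by_nth[of _ k])
       (use av t dc wy in \<open>auto simp: y_def is_vec_length is_vec_nth l_minus a_ac r_neg1 minus_eq r_neg\<close>)
  ultimately have "v = vadd R (vsmult R d (h # t)) (\<zero> # y)" using av by simp
  with dc wy show thesis by (rule that)
qed

end

text \<open>Induction on \<open>k\<close>: eliminate the first coordinate with a pivot equation whose first
  entry is nonzero, which exists because the functional \<open>(1, 0, \<dots>, 0)\<close> is known.\<close>
lemma span_set_if_knows_all:
  "is_vec_list R k S \<Longrightarrow> (\<forall>\<mu>. is_vec R k \<mu> \<and> \<mu> \<noteq> vzero R k \<longrightarrow> knows R \<mu> S) \<Longrightarrow>
   is_vec R k v \<Longrightarrow> v \<in> span_set R k S"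
proof (induction k arbitrary: S v)
  case 0
  then have "v = vzero R 0" by (simp add: vzero_def)
  then show ?case using span_set.zero by metis
next
  case (Suc k)
  note S = Suc.prems(1) and knows_all = Suc.prems(2)
  have "knows R (\<one> # vzero R k) S" using knows_all is_vec_vzero[of k] by simp
  then obtain s0 where s0: "s0 \<in> set S" "dot R (\<one> # vzero R k) s0 \<noteq> \<zero>"
    unfolding knows_def by blast
  have "is_vec R (Suc k) s0" using S s0 by (auto simp: is_vec_list_def)
  then obtain h t where ht: "s0 = h # t" "h \<in> carrier R" "is_vec R k t" by (rule is_vec_SucE)
  have h: "h \<noteq> \<zero>" using s0(2) ht by (simp add: dot_vzero_left)
  let ?S' = "map (eliminate R h t) S"
  have S': "is_vec_list R k ?S'"
    using S is_vec_eliminate[OF ht(2) h ht(3)] by (auto simp: is_vec_list_def)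
  have "knows R \<mu>' ?S'" if "is_vec R k \<mu>'" "\<mu>' \<noteq> vzero R k" for \<mu>'
  proof -
    let ?\<mu> = "(\<ominus> (dot R \<mu>' t \<otimes> inv h)) # \<mu>'"
    have "dot R \<mu>' t \<in> carrier R" using that ht by (auto simp: is_vec_def)
    then have "knows R ?\<mu> S"
      using knows_all that inv_pivot[OF ht(2) h] by auto
    then obtain s where "s \<in> set S" "dot R ?\<mu> s \<noteq> \<zero>" unfolding knows_def by blast
    moreover have "is_vec R (Suc k) s" using \<open>s \<in> set S\<close> S by (auto simp: is_vec_list_def)
    ultimately show ?thesis
      using dot_eliminate[OF ht(2) h ht(3) that(1)] unfolding knows_def by force
  qed
  then have span': "\<And>y. is_vec R k y \<Longrightarrow> y \<in> span_set R k ?S'"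
    using Suc.IH[OF S'] by blast
  obtain d y where dy: "d \<in> carrier R" "is_vec R k y" "v = vadd R (vsmult R d (h # t)) (\<zero> # y)"
    using pivot_decompose[OF ht(2) h ht(3) Suc.prems(3)] .
  show ?case
    unfolding dy(3)
    using Cons_zero_span_set_eliminate[OF ht(2) h ht(3) S _ span'[OF dy(2)]] s0 ht dy
    by (intro span_set.add span_set.smult) (auto intro: span_set.elem)
qed

lemma learned_all_if_knows_all:
  assumes "is_vec_list R k S" "\<forall>\<mu>. is_vec R k \<mu> \<and> \<mu> \<noteq> vzero R k \<longrightarrow> knows R \<mu> S"
  shows "learned_all R k S"
  unfolding learned_all_def
  using span_set_if_knows_all[OF assms] span_set_imp_in_span[OF assms(1)] by auto

end

section \<open>Probability of composed distributions\<close>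

lemma integrable_pmf_bounded:
  fixes f :: "'a \<Rightarrow> real"
  assumes "\<And>x. x \<in> set_pmf p \<Longrightarrow> \<bar>f x\<bar> \<le> B"
  shows "integrable (measure_pmf p) f"
  by (rule measure_pmf.integrable_const_bound[where B=B]) (use assms in \<open>auto simp: AE_measure_pmf_iff\<close>)

lemma measure_bind_pmf_eq_integral:
  "measure_pmf.prob (bind_pmf p f) A = (\<integral>x. measure_pmf.prob (f x) A \<partial>measure_pmf p)"
proof -
  have int: "integrable (measure_pmf p) (\<lambda>x. measure_pmf.prob (f x) A)"
    by (rule integrable_pmf_bounded[where B=1]) auto
  have "ennreal (measure_pmf.prob (bind_pmf p f) A) = emeasure (bind_pmf p f) A"
    by (simp add: measure_pmf.emeasure_eq_measure)
  also have "\<dots> = (\<integral>\<^sup>+x. emeasure (f x) A \<partial>measure_pmf p)" by simp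
  also have "\<dots> = (\<integral>\<^sup>+x. ennreal (measure_pmf.prob (f x) A) \<partial>measure_pmf p)"
    by (simp add: measure_pmf.emeasure_eq_measure)
  also have "\<dots> = ennreal (\<integral>x. measure_pmf.prob (f x) A \<partial>measure_pmf p)"
    by (rule nn_integral_eq_integral[OF int]) auto
  finally show ?thesis
    by (subst (asm) ennreal_inj) (auto intro!: integral_nonneg_AE)
qed

lemma measure_bind_pmf_le:
  assumes "\<And>x. x \<in> set_pmf p \<Longrightarrow> measure_pmf.prob (f x) A \<le> c"
  shows "measure_pmf.prob (bind_pmf p f) A \<le> c"
proof -
  have "measure_pmf.prob (bind_pmf p f) A = (\<integral>x. measure_pmf.prob (f x) A \<partial>measure_pmf p)"
    by (rule measure_bind_pmf_eq_integral)
  also have "\<dots> \<le> (\<integral>x. c \<partial>measure_pmf p)"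
    using assms
    by (intro integral_mono_AE integrable_pmf_bounded[where B="1 + \<bar>c\<bar>"])
       (auto simp: AE_measure_pmf_iff intro: order_trans[OF measure_pmf.prob_le_1])
  finally show ?thesis by simp
qed

lemma measure_bind_pmf_ge:
  assumes "\<And>x. x \<in> set_pmf p \<Longrightarrow> measure_pmf.prob (f x) A \<ge> c"
  shows "measure_pmf.prob (bind_pmf p f) A \<ge> c"
proof -
  have "(\<integral>x. c \<partial>measure_pmf p) \<le> (\<integral>x. measure_pmf.prob (f x) A \<partial>measure_pmf p)"
    using assms
    by (intro integral_mono_AE integrable_pmf_bounded[where B="1 + \<bar>c\<bar>"])
       (auto simp: AE_measure_pmf_iff intro: order_trans[OF measure_pmf.prob_le_1])
  also have "\<dots> = measure_pmf.prob (bind_pmf p f) A"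
    by (rule measure_bind_pmf_eq_integral[symmetric])
  finally show ?thesis by simp
qed

lemma measure_bind_pmf_le_mixture:
  assumes "\<And>x. x \<in> set_pmf p \<Longrightarrow> Q x \<Longrightarrow> measure_pmf.prob (f x) A \<le> a"
    and "\<And>x. x \<in> set_pmf p \<Longrightarrow> measure_pmf.prob (f x) A \<le> b"
    and "a \<le> b" and "measure_pmf.prob p {x. Q x} \<ge> P"
  shows "measure_pmf.prob (bind_pmf p f) A \<le> P * a + (1 - P) * b"
proof -
  let ?g = "\<lambda>x. b + (a - b) * indicator {x. Q x} x"
  have "measure_pmf.prob (bind_pmf p f) A = (\<integral>x. measure_pmf.prob (f x) A \<partial>measure_pmf p)"
    by (rule measure_bind_pmf_eq_integral)
  also have "\<dots> \<le> (\<integral>x. ?g x \<partial>measure_pmf p)"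
    using assms(1,2)
    by (intro integral_mono_AE integrable_pmf_bounded[where B="1 + \<bar>a\<bar> + \<bar>b\<bar>"])
       (auto simp: AE_measure_pmf_iff split: split_indicator intro: order_trans[OF measure_pmf.prob_le_1])
  also have "\<dots> = (\<integral>x. b \<partial>measure_pmf p) + (\<integral>x. (a - b) * indicator {x. Q x} x \<partial>measure_pmf p)"
    by (rule Bochner_Integration.integral_add; rule integrable_pmf_bounded[where B="\<bar>a\<bar> + \<bar>b\<bar>"])
       (auto split: split_indicator)
  also have "\<dots> = b + (a - b) * measure_pmf.prob p {x. Q x}"
    by (simp add: integral_mult_right_zero)
  also have "\<dots> \<le> b + (a - b) * P"
    using assms(3,4) by (intro add_left_mono mult_left_mono_neg) auto
  also have "\<dots> = P * a + (1 - P) * b" by (simp add: algebra_simps)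
  finally show ?thesis .
qed

section \<open>Progress along a schedule\<close>

primrec run_schedule :: "('l \<Rightarrow> 'a \<Rightarrow> 'a pmf) \<Rightarrow> 'l list \<Rightarrow> 'a \<Rightarrow> 'a pmf" where
  "run_schedule g [] s = return_pmf s"
| "run_schedule g (v # vs) s = bind_pmf (g v s) (run_schedule g vs)"

text \<open>\<open>enough_trials H L \<sigma> j m\<close>: however the trials offered by \<open>\<sigma>\<close> turn out, starting at
  progress \<open>j\<close> the progress reaches \<open>L\<close> unless \<open>m\<close> trials fail. Step \<open>v\<close> offers a trial at
  progress \<open>j\<close> iff \<open>H v j\<close>; a successful trial increases the progress by one.\<close>
fun enough_trials :: "('l \<Rightarrow> nat \<Rightarrow> bool) \<Rightarrow> nat \<Rightarrow> 'l list \<Rightarrow> nat \<Rightarrow> nat \<Rightarrow> bool" where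
  "enough_trials H L \<sigma> j 0 = True"
| "enough_trials H L [] j (Suc m) = (L \<le> j)"
| "enough_trials H L (v # vs) j (Suc m) = (L \<le> j \<or> (if H v j then enough_trials H L vs (Suc j) (Suc m) \<and> enough_trials H L vs j m
                                               else enough_trials H L vs j (Suc m)))"

lemma enough_trials_Suc_imp: "enough_trials H L \<sigma> j (Suc m) \<Longrightarrow> enough_trials H L \<sigma> j m"
proof (induction \<sigma> arbitrary: j m)
  case Nil then show ?case by (cases m) auto
next
  case (Cons v vs) then show ?case
    by (cases m) (auto split: if_splits)
qed

lemma enough_trials_mono_progress: "enough_trials H L \<sigma> j m \<Longrightarrow> j \<le> j' \<Longrightarrow> enough_trials H L \<sigma> j' m"
proof (induction \<sigma> arbitrary: j j' m)
  case Nil then show ?case by (cases m) auto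
next
  case (Cons v vs)
  show ?case
  proof (cases m)
    case (Suc m')
    consider "L \<le> j'" | "\<not> L \<le> j" "H v j" | "\<not> L \<le> j" "\<not> H v j"
      using Cons.prems(2) by linarith
    then show ?thesis
    proof cases
      case 2
      then have trials: "enough_trials H L vs (Suc j) (Suc m')" "enough_trials H L vs j m'"
        using Cons.prems(1) Suc by auto
      show ?thesis
      proof (cases "H v j'")
        case True
        then show ?thesis
          using Suc Cons.IH[OF trials(1), of "Suc j'"] Cons.IH[OF trials(2), of j'] Cons.prems(2) by simp
      next
        case False
        then have "Suc j \<le> j'" using 2 Cons.prems(2) by (cases "j = j'") auto
        then show ?thesis using Suc False Cons.IH[OF trials(1), of j'] by simp
      qed
    next
      case 3
      then have t: "enough_trials H L vs j (Suc m')" using Cons.prems(1) Suc by auto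
      have "enough_trials H L vs j' (Suc m')" "enough_trials H L vs (Suc j') (Suc m')"
        "enough_trials H L vs j' m'"
        using Cons.IH[OF t] Cons.IH[OF enough_trials_Suc_imp[OF t]] Cons.prems(2) by auto
      then show ?thesis using Suc by simp
    qed (simp add: Suc)
  qed simp
qed
lemma run_schedule_invariant:
  fixes \<phi> :: "'a \<Rightarrow> nat"
  assumes inv: "\<And>v s s'. I s \<Longrightarrow> s' \<in> set_pmf (g v s) \<Longrightarrow> I s' \<and> \<phi> s \<le> \<phi> s'"
  shows "I s \<Longrightarrow> s' \<in> set_pmf (run_schedule g \<sigma> s) \<Longrightarrow> I s' \<and> \<phi> s \<le> \<phi> s'"
proof (induction \<sigma> arbitrary: s)
  case Nil then show ?case by simp
next
  case (Cons v vs)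
  then obtain t where t: "t \<in> set_pmf (g v s)" "s' \<in> set_pmf (run_schedule g vs t)" by auto
  with inv Cons.prems have "I t" "\<phi> s \<le> \<phi> t" by auto
  with Cons.IH t show ?case by fastforce
qed

lemma run_schedule_preserves:
  assumes "\<And>v s s'. I s \<Longrightarrow> s' \<in> set_pmf (g v s) \<Longrightarrow> I s'"
  shows "I s \<Longrightarrow> s' \<in> set_pmf (run_schedule g \<sigma> s) \<Longrightarrow> I s'"
proof (induction \<sigma> arbitrary: s)
  case (Cons v vs)
  then obtain t where "t \<in> set_pmf (g v s)" "s' \<in> set_pmf (run_schedule g vs t)" by auto
  then show ?case using Cons.IH assms[OF Cons.prems(1)] by blast
qed simp

lemma potential_mixture_le:
  fixes a \<theta> \<epsilon> :: real
  assumes "1 \<le> a" "0 < \<theta>" "(1 - \<epsilon>) / a + \<epsilon> / \<theta> \<le> 1" "1 \<le> l"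
  shows "(1 - \<epsilon>) * (a ^ (l - 1) * \<theta> ^ Suc m) + (1 - (1 - \<epsilon>)) * (a ^ l * \<theta> ^ m) \<le> a ^ l * \<theta> ^ Suc m"
proof -
  have "a ^ l = a ^ (l - 1) * a" using assms(4) by (simp add: power_Suc2[symmetric])
  then have "(1 - \<epsilon>) * (a ^ (l - 1) * \<theta> ^ Suc m) + (1 - (1 - \<epsilon>)) * (a ^ l * \<theta> ^ m)
      = a ^ l * \<theta> ^ Suc m * ((1 - \<epsilon>) / a + \<epsilon> / \<theta>)"
    using assms(1,2) by (simp add: field_simps)
  also have "\<dots> \<le> a ^ l * \<theta> ^ Suc m"
    using assms by (intro mult_left_le) auto
  finally show ?thesis .
qed

text \<open>Tail bound for a progress measure \<open>\<phi>\<close> that never decreases and, at every trial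
  offered by the schedule, increases with probability at least \<open>1 - \<epsilon>\<close>; the potential
  \<open>a ^ (L - \<phi>) * \<theta> ^ m\<close> does not increase in expectation.\<close>
lemma run_schedule_progress_tail:
  fixes \<phi> :: "'a \<Rightarrow> nat" and a \<theta> \<epsilon> :: real
  assumes inv: "\<And>v s s'. I s \<Longrightarrow> s' \<in> set_pmf (g v s) \<Longrightarrow> I s' \<and> \<phi> s \<le> \<phi> s'"
    and adv: "\<And>v s. I s \<Longrightarrow> \<phi> s < L \<Longrightarrow> H v (\<phi> s) \<Longrightarrow>
                measure_pmf.prob (g v s) {s'. \<phi> s < \<phi> s'} \<ge> 1 - \<epsilon>"
    and a: "1 \<le> a" and theta_range: "0 < \<theta>" "\<theta> \<le> 1" and e: "0 \<le> \<epsilon>" "\<epsilon> \<le> 1"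
    and ineq: "(1 - \<epsilon>) / a + \<epsilon> / \<theta> \<le> 1"
  shows "I s \<Longrightarrow> enough_trials H L \<sigma> (\<phi> s) m \<Longrightarrow>
     measure_pmf.prob (run_schedule g \<sigma> s) {s'. \<phi> s' < L} \<le> a ^ (L - \<phi> s) * \<theta> ^ m"
proof (induction \<sigma> arbitrary: s m)
  have trivial: "measure_pmf.prob (run_schedule g \<sigma> s) {s'. \<phi> s' < L} \<le> a ^ (L - \<phi> s) * \<theta> ^ m"
    if "I s" "m = 0 \<or> L \<le> \<phi> s" for \<sigma> s m
  proof (cases "m = 0")
    case True
    have "measure_pmf.prob (run_schedule g \<sigma> s) {s'. \<phi> s' < L} \<le> 1"
      by (rule measure_pmf.prob_le_1)
    also have "1 \<le> a ^ (L - \<phi> s)" using a by (rule one_le_power)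
    finally show ?thesis using True by simp
  next
    case False
    then have "measure_pmf.prob (run_schedule g \<sigma> s) {s'. \<phi> s' < L} = 0"
      unfolding measure_pmf_zero_iff using run_schedule_invariant[of I g \<phi>, OF inv that(1)] that(2)
      by fastforce
    then show ?thesis using a theta_range by simp
  qed
  {
    case Nil
    then show ?case using trivial[of s m "[]"] by (cases m) auto
  next
    case (Cons v vs)
    have IH: "measure_pmf.prob (run_schedule g vs t) {s'. \<phi> s' < L} \<le> a ^ (L - j) * \<theta> ^ m'"
      if "t \<in> set_pmf (g v s)" "j \<le> \<phi> t" "enough_trials H L vs j m'" for t j m'
    proof -
      have "I t" using inv Cons.prems(1) that(1) by blast
      then have "measure_pmf.prob (run_schedule g vs t) {s'. \<phi> s' < L} \<le> a ^ (L - \<phi> t) * \<theta> ^ m'"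
        using Cons.IH enough_trials_mono_progress[OF that(3,2)] by blast
      also have "\<dots> \<le> a ^ (L - j) * \<theta> ^ m'"
        using a theta_range that(2) by (intro mult_right_mono power_increasing) auto
      finally show ?thesis .
    qed
    show ?case
    proof (cases "m = 0 \<or> L \<le> \<phi> s")
      case True
      then show ?thesis using trivial Cons.prems(1) by blast
    next
      case False
      then obtain m' where m: "m = Suc m'" and nL: "\<phi> s < L" by (cases m) auto
      show ?thesis
      proof (cases "H v (\<phi> s)")
        case False
        then have "enough_trials H L vs (\<phi> s) m" using Cons.prems(2) m nL by simp
        then show ?thesis unfolding run_schedule.simps
          using inv Cons.prems(1) by (intro measure_bind_pmf_le IH) auto
      next
        case True
        then have trials: "enough_trials H L vs (Suc (\<phi> s)) m" "enough_trials H L vs (\<phi> s) m'"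
          using Cons.prems(2) m nL by auto
        define l where "l = L - \<phi> s"
        have l: "L - Suc (\<phi> s) = l - 1" "1 \<le> l" using nL by (auto simp: l_def)
        have "a ^ (l - 1) * \<theta> ^ Suc m' \<le> a ^ (l - 1) * a * \<theta> ^ m'"
          using a theta_range by (simp add: mult_right_mono mult_left_mono)
        also have "\<dots> = a ^ l * \<theta> ^ m'" using l by (simp add: power_Suc2[symmetric])
        finally have AB: "a ^ (l - 1) * \<theta> ^ Suc m' \<le> a ^ l * \<theta> ^ m'" .
        have "measure_pmf.prob (bind_pmf (g v s) (run_schedule g vs)) {s'. \<phi> s' < L}
            \<le> (1 - \<epsilon>) * (a ^ (l - 1) * \<theta> ^ Suc m') + (1 - (1 - \<epsilon>)) * (a ^ l * \<theta> ^ m')"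
        proof (rule measure_bind_pmf_le_mixture[where Q="\<lambda>t. \<phi> s < \<phi> t", OF _ _ AB])
          show "measure_pmf.prob (run_schedule g vs t) {s'. \<phi> s' < L} \<le> a ^ (l - 1) * \<theta> ^ Suc m'"
            if "t \<in> set_pmf (g v s)" "\<phi> s < \<phi> t" for t
            using IH[OF that(1) _ trials(1)] that(2) l m by simp
          show "measure_pmf.prob (run_schedule g vs t) {s'. \<phi> s' < L} \<le> a ^ l * \<theta> ^ m'"
            if "t \<in> set_pmf (g v s)" for t
            using IH[OF that _ trials(2)] inv Cons.prems(1) that by (simp add: l_def)
          show "1 - \<epsilon> \<le> measure_pmf.prob (g v s) {t. \<phi> s < \<phi> t}"
            using adv[OF Cons.prems(1) nL True] by simp
        qed
        also have "\<dots> \<le> a ^ l * \<theta> ^ Suc m'"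
          using potential_mixture_le[OF a theta_range(1) ineq l(2)] .
        finally show ?thesis by (simp add: m l_def)
      qed
    qed
  }
qed

lemma measure_pmf_cong_support:
  assumes "\<And>x. x \<in> set_pmf p \<Longrightarrow> x \<in> A \<longleftrightarrow> x \<in> B"
  shows "measure_pmf.prob p A = measure_pmf.prob p B"
proof -
  have "A \<inter> set_pmf p = B \<inter> set_pmf p" using assms by auto
  then show ?thesis by (metis measure_Int_set_pmf)
qed

lemma measure_pmf_mono_support:
  assumes "\<And>x. x \<in> set_pmf p \<Longrightarrow> x \<in> A \<Longrightarrow> x \<in> B"
  shows "measure_pmf.prob p A \<le> measure_pmf.prob p B"
proof -
  have "measure_pmf.prob p A = measure_pmf.prob p (A \<inter> set_pmf p)" by (simp add: measure_Int_set_pmf)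
  also have "\<dots> \<le> measure_pmf.prob p B" using assms by (intro measure_pmf.finite_measure_mono) auto
  finally show ?thesis .
qed

section \<open>Random linear combinations\<close>

locale finite_nat_field = nat_field + assumes fin: "finite (carrier R)"

context finite_nat_field
begin

definition q :: real where "q = real (card (carrier R))"

lemma carrier_ne: "carrier R \<noteq> {}" using zero_closed by blast

lemma q_ge2: "q \<ge> 2"
proof -
  have "{\<zero>, \<one>} \<subseteq> carrier R" by auto
  then have "card {\<zero>, \<one>} \<le> card (carrier R)" using fin by (rule card_mono[rotated])
  then show ?thesis by (simp add: q_def)
qed

lemma is_vec_rand_comb: "is_vec_list R k S \<Longrightarrow> v \<in> set_pmf (rand_comb R k S) \<Longrightarrow> is_vec R k v"
proof (induction S arbitrary: v)
  case Nil then show ?case by auto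
next
  case (Cons e es)
  then obtain c w where "c \<in> carrier R" "w \<in> set_pmf (rand_comb R k es)" "v = vadd R (vsmult R c e) w"
    using fin carrier_ne by auto
  then show ?case using Cons by (auto simp: is_vec_list_def)
qed

lemma uniform_affine_root_prob:
  assumes d: "d \<in> carrier R" "d \<noteq> \<zero>" and x: "x \<in> carrier R"
  shows "measure_pmf.prob (pmf_of_set (carrier R)) {c. c \<otimes> d \<oplus> x = \<zero>} \<le> 1 / q"
proof -
  have "carrier R \<inter> {c. c \<otimes> d \<oplus> x = \<zero>} \<subseteq> {\<ominus> x \<otimes> inv d}"
  proof
    fix c assume "c \<in> carrier R \<inter> {c. c \<otimes> d \<oplus> x = \<zero>}"
    then have c: "c \<in> carrier R" "c \<otimes> d \<oplus> x = \<zero>" by auto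
    then have "c \<otimes> d = \<ominus> x" using minus_equality[of "c \<otimes> d" x] d x by simp
    then have "c \<otimes> d \<otimes> inv d = \<ominus> x \<otimes> inv d" by simp
    then show "c \<in> {\<ominus> x \<otimes> inv d}" using c d field_Units by (simp add: m_assoc)
  qed
  then have "card (carrier R \<inter> {c. c \<otimes> d \<oplus> x = \<zero>}) \<le> 1"
    using card_mono[of "{\<ominus> x \<otimes> inv d}"] by simp
  then show ?thesis
    using fin carrier_ne q_ge2 by (simp add: measure_pmf_of_set q_def divide_right_mono)
qed

text \<open>Conditioned on all other coefficients, at most one value of the coefficient of an
  equation not orthogonal to \<open>\<mu>\<close> makes the combination orthogonal to \<open>\<mu>\<close>.\<close>
lemma rand_comb_orthogonal_prob:
  "is_vec_list R k S \<Longrightarrow> is_vec R k \<mu> \<Longrightarrow> knows R \<mu> S \<Longrightarrow>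
     measure_pmf.prob (rand_comb R k S) {v. dot R \<mu> v = \<zero>} \<le> 1 / q"
proof (induction S)
  case Nil then show ?case by (simp add: knows_def)
next
  case (Cons e es)
  have e: "is_vec R k e" and es: "is_vec_list R k es" using Cons.prems by (auto simp: is_vec_list_def)
  define F where "F c v = vadd R (vsmult R c e) v" for c v
  have rc: "rand_comb R k (e # es)
      = bind_pmf (pmf_of_set (carrier R)) (\<lambda>c. map_pmf (F c) (rand_comb R k es))"
    by (simp add: F_def map_pmf_def)
  have dot_carrier: "dot R \<mu> v \<in> carrier R" if "is_vec R k v" for v
    using that Cons.prems(2) by (auto simp: is_vec_def)
  have dot_F: "dot R \<mu> (F c v) = c \<otimes> dot R \<mu> e \<oplus> dot R \<mu> v"
    if "c \<in> set_pmf (pmf_of_set (carrier R))" "v \<in> set_pmf (rand_comb R k es)" for c v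
    using that e es Cons.prems(2) fin carrier_ne is_vec_rand_comb
    by (simp add: F_def dot_vadd dot_vsmult is_vec_vsmult)
  show ?case
  proof (cases "dot R \<mu> e = \<zero>")
    case True
    then have "knows R \<mu> es" using Cons.prems(3) by (auto simp: knows_def)
    note IH = Cons.IH[OF es Cons.prems(2) this]
    show ?thesis unfolding rc
    proof (rule measure_bind_pmf_le)
      fix c assume c: "c \<in> set_pmf (pmf_of_set (carrier R))"
      have "measure_pmf.prob (map_pmf (F c) (rand_comb R k es)) {v. dot R \<mu> v = \<zero>}
          = measure_pmf.prob (rand_comb R k es) {v. dot R \<mu> v = \<zero>}"
        unfolding measure_map_pmf
        by (rule measure_pmf_cong_support)
           (use c True dot_F dot_carrier is_vec_rand_comb[OF es] fin carrier_ne in auto)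
      then show "measure_pmf.prob (map_pmf (F c) (rand_comb R k es)) {v. dot R \<mu> v = \<zero>} \<le> 1 / q"
        using IH by simp
    qed
  next
    case False
    have "rand_comb R k (e # es)
        = bind_pmf (rand_comb R k es) (\<lambda>v. map_pmf (\<lambda>c. F c v) (pmf_of_set (carrier R)))"
      unfolding rc map_pmf_def by (rule bind_commute_pmf)
    also have "measure_pmf.prob \<dots> {v. dot R \<mu> v = \<zero>} \<le> 1 / q"
    proof (rule measure_bind_pmf_le)
      fix v assume v: "v \<in> set_pmf (rand_comb R k es)"
      have "measure_pmf.prob (map_pmf (\<lambda>c. F c v) (pmf_of_set (carrier R))) {v. dot R \<mu> v = \<zero>}
          = measure_pmf.prob (pmf_of_set (carrier R)) {c. c \<otimes> dot R \<mu> e \<oplus> dot R \<mu> v = \<zero>}"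
        unfolding measure_map_pmf
        by (rule measure_pmf_cong_support) (use v dot_F in auto)
      also have "\<dots> \<le> 1 / q"
        using False e v dot_carrier is_vec_rand_comb[OF es] by (intro uniform_affine_root_prob) auto
      finally show "measure_pmf.prob (map_pmf (\<lambda>c. F c v) (pmf_of_set (carrier R)))
          {v. dot R \<mu> v = \<zero>} \<le> 1 / q" .
    qed
    finally show ?thesis .
  qed
qed

lemma rand_comb_not_orthogonal_prob:
  assumes "is_vec_list R k S" "is_vec R k \<mu>" "knows R \<mu> S"
  shows "measure_pmf.prob (rand_comb R k S) {v. dot R \<mu> v \<noteq> \<zero>} \<ge> 1 - 1 / q"
proof -
  have "measure_pmf.prob (rand_comb R k S) {v. dot R \<mu> v \<noteq> \<zero>} =
        1 - measure_pmf.prob (rand_comb R k S) {v. dot R \<mu> v = \<zero>}"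
    using measure_pmf.prob_compl[of "{v. dot R \<mu> v = \<zero>}" "rand_comb R k S"]
    by (simp add: Compl_eq_Diff_UNIV[symmetric] Collect_neg_eq)
  then show ?thesis using rand_comb_orthogonal_prob[OF assms] by simp
qed

end

section \<open>The two EXCHANGE steps\<close>

definition is_vec_state :: "nat ring \<Rightarrow> nat \<Rightarrow> gstate \<Rightarrow> bool" where
  "is_vec_state R k st \<longleftrightarrow> (\<forall>w. is_vec_list R k (st w))"

lemma set_pmf_seqD: "xs \<in> set_pmf (pmf_seq ps) \<Longrightarrow> length xs = length ps \<and> (\<forall>i<length ps. xs ! i \<in> set_pmf (ps ! i))"
proof (induction ps arbitrary: xs)
  case Nil then show ?case by simp
next
  case (Cons p ps)
  then obtain x ys where "x \<in> set_pmf p" "ys \<in> set_pmf (pmf_seq ps)" "xs = x # ys" by auto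
  then show ?case using Cons.IH by (auto simp: nth_Cons split: nat.splits)
qed

lemma map_pmf_seq_nth: "i < length ps \<Longrightarrow> map_pmf (\<lambda>xs. xs ! i) (pmf_seq ps) = ps ! i"
proof (induction ps arbitrary: i)
  case Nil then show ?case by simp
next
  case (Cons p ps)
  show ?case
  proof (cases i)
    case 0
    have "map_pmf (\<lambda>xs. xs ! i) (pmf_seq (p # ps)) = bind_pmf p (\<lambda>x. bind_pmf (pmf_seq ps) (\<lambda>_. return_pmf x))"
      by (simp add: 0 map_bind_pmf bind_return_pmf map_pmf_def bind_assoc_pmf)
    also have "\<dots> = p" by (simp add: bind_return_pmf')
    finally show ?thesis using 0 by simp
  next
    case (Suc j)
    then have j: "j < length ps" using Cons.prems by simp
    have "map_pmf (\<lambda>xs. xs ! i) (pmf_seq (p # ps)) = bind_pmf p (\<lambda>x. map_pmf (\<lambda>xs. xs ! j) (pmf_seq ps))"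
      by (simp add: Suc map_bind_pmf bind_return_pmf map_pmf_def bind_assoc_pmf)
    also have "\<dots> = ps ! j" using Cons.IH[OF j] by simp
    finally show ?thesis using Suc by simp
  qed
qed

context finite_nat_field
begin

lemma is_vec_list_fold_store: "is_vec_list R k S \<Longrightarrow> \<forall>e\<in>set es. is_vec R k e \<Longrightarrow> is_vec_list R k (fold (\<lambda>e S. store R k S e) es S)"
  by (induction es arbitrary: S) (auto simp: is_vec_list_store)

lemma knows_fold_store_mono: "knows R \<mu> S \<Longrightarrow> knows R \<mu> (fold (\<lambda>e S. store R k S e) es S)"
  by (induction es arbitrary: S) (auto simp: knows_store_mono)

lemma knows_fold_store: "is_vec_list R k S \<Longrightarrow> is_vec R k \<mu> \<Longrightarrow> \<forall>e\<in>set es. is_vec R k e \<Longrightarrow> e \<in> set es \<Longrightarrow>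
   dot R \<mu> e \<noteq> \<zero> \<Longrightarrow> knows R \<mu> (fold (\<lambda>e S. store R k S e) es S)"
proof (induction es arbitrary: S)
  case Nil then show ?case by simp
next
  case (Cons x xs)
  show ?case
  proof (cases "e = x")
    case True
    then have "knows R \<mu> (store R k S x)" using Cons.prems knows_store by auto
    then show ?thesis using knows_fold_store_mono by simp
  next
    case False
    then show ?thesis using Cons by (auto simp: is_vec_list_store)
  qed
qed

definition sync_update :: "nat \<Rightarrow> nat \<Rightarrow> nat \<Rightarrow> (nat \<Rightarrow> nat) \<Rightarrow> gstate \<Rightarrow> (nat list \<times> nat list) list \<Rightarrow> nat \<Rightarrow> nat list list" where
  "sync_update k n r par st msgs = (\<lambda>w. if w < n then
          fold (\<lambda>e S. store R k S e)
            ([fst (msgs ! v). v \<leftarrow> [0..<n], v \<noteq> r, par v = w]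
             @ (if w \<noteq> r then [snd (msgs ! w)] else []))
            (st w)
        else st w)"

lemma sync_step_eq_map_pmf: "sync_step R k n r par st =
   map_pmf (sync_update k n r par st) (pmf_seq (map (\<lambda>v. pair_pmf (rand_comb R k (st v)) (rand_comb R k (st (par v)))) [0..<n]))"
  by (simp add: sync_step_def sync_update_def map_pmf_def)

lemma sync_messages_is_vec:
  assumes "is_vec_state R k st" "msgs \<in> set_pmf (pmf_seq (map (\<lambda>v. pair_pmf (rand_comb R k (st v)) (rand_comb R k (st (par v)))) [0..<n]))"
  shows "length msgs = n" "\<And>v. v < n \<Longrightarrow> is_vec R k (fst (msgs ! v)) \<and> is_vec R k (snd (msgs ! v))"
proof -
  note s = set_pmf_seqD[OF assms(2)]
  show "length msgs = n" using s by simp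
  fix v assume "v < n"
  then have "msgs ! v \<in> set_pmf (pair_pmf (rand_comb R k (st v)) (rand_comb R k (st (par v))))"
    using s by simp
  then show "is_vec R k (fst (msgs ! v)) \<and> is_vec R k (snd (msgs ! v))"
    using assms(1) is_vec_rand_comb[of k "st v"] is_vec_rand_comb[of k "st (par v)"] by (auto simp: is_vec_state_def set_pair_pmf)
qed

lemma sync_step_support:
  assumes "is_vec_state R k st" "st' \<in> set_pmf (sync_step R k n r par st)"
  shows "is_vec_state R k st'" "\<And>w. knows R \<mu> (st w) \<Longrightarrow> knows R \<mu> (st' w)"
proof -
  obtain msgs where m: "msgs \<in> set_pmf (pmf_seq (map (\<lambda>v. pair_pmf (rand_comb R k (st v)) (rand_comb R k (st (par v)))) [0..<n]))"
    and st': "st' = sync_update k n r par st msgs"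
    using assms(2) by (auto simp: sync_step_eq_map_pmf)
  note mw = sync_messages_is_vec[OF assms(1) m]
  show "is_vec_state R k st'"
    unfolding is_vec_state_def st' sync_update_def
    using assms(1) mw by (auto simp: is_vec_state_def intro!: is_vec_list_fold_store is_vec_list_store)
  fix w assume "knows R \<mu> (st w)"
  then show "knows R \<mu> (st' w)" unfolding st' sync_update_def by (auto intro!: knows_fold_store_mono knows_store_mono)
qed

lemma sync_transfer:
  assumes wst: "is_vec_state R k st" and w\<mu>: "is_vec R k \<mu>" and w: "w < n"
    and source: "(source < n \<and> source \<noteq> r \<and> par source = w) \<or> (w \<noteq> r \<and> source = par w)"
    and kn: "knows R \<mu> (st source)"
  shows "measure_pmf.prob (sync_step R k n r par st) {st'. knows R \<mu> (st' w)} \<ge> 1 - 1 / q"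
proof -
  define ps where "ps = map (\<lambda>v. pair_pmf (rand_comb R k (st v)) (rand_comb R k (st (par v)))) [0..<n]"
  define sel where "sel = (\<lambda>msgs :: (nat list \<times> nat list) list. if source < n \<and> source \<noteq> r \<and> par source = w then fst (msgs ! source) else snd (msgs ! w))"
  have msel: "map_pmf sel (pmf_seq ps) = rand_comb R k (st source)"
  proof (cases "source < n \<and> source \<noteq> r \<and> par source = w")
    case True
    have "map_pmf sel (pmf_seq ps) = map_pmf fst (map_pmf (\<lambda>xs. xs ! source) (pmf_seq ps))"
      by (simp add: sel_def True pmf.map_comp o_def)
    also have "\<dots> = rand_comb R k (st source)" using True by (simp add: map_pmf_seq_nth ps_def map_fst_pair_pmf)
    finally show ?thesis .
  next
    case False
    then have F: "w \<noteq> r" "source = par w" using source by auto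
    have "map_pmf sel (pmf_seq ps) = map_pmf snd (map_pmf (\<lambda>xs. xs ! w) (pmf_seq ps))"
      by (simp add: sel_def False pmf.map_comp o_def)
    also have "\<dots> = rand_comb R k (st source)" using w F by (simp add: map_pmf_seq_nth ps_def map_snd_pair_pmf)
    finally show ?thesis .
  qed
  have "1 - 1 / q \<le> measure_pmf.prob (rand_comb R k (st source)) {x. dot R \<mu> x \<noteq> \<zero>}"
    using rand_comb_not_orthogonal_prob wst w\<mu> kn by (auto simp: is_vec_state_def)
  also have "\<dots> = measure_pmf.prob (pmf_seq ps) {msgs. dot R \<mu> (sel msgs) \<noteq> \<zero>}"
    by (simp add: msel[symmetric])
  also have "\<dots> \<le> measure_pmf.prob (pmf_seq ps) (sync_update k n r par st -` {st'. knows R \<mu> (st' w)})"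
  proof (rule measure_pmf_mono_support)
    fix msgs assume m: "msgs \<in> set_pmf (pmf_seq ps)" and d: "msgs \<in> {msgs. dot R \<mu> (sel msgs) \<noteq> \<zero>}"
    note mw = sync_messages_is_vec[OF wst m[unfolded ps_def]]
    let ?L = "[fst (msgs ! v). v \<leftarrow> [0..<n], v \<noteq> r, par v = w] @ (if w \<noteq> r then [snd (msgs ! w)] else [])"
    have Lw: "\<forall>e\<in>set ?L. is_vec R k e" using mw w by auto
    have "sel msgs \<in> set ?L" using source w by (auto simp: sel_def)
    then have "knows R \<mu> (fold (\<lambda>e S. store R k S e) ?L (st w))"
      using knows_fold_store[OF _ w\<mu> Lw] wst d by (auto simp: is_vec_state_def)
    then show "msgs \<in> sync_update k n r par st -` {st'. knows R \<mu> (st' w)}"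
      using w by (simp add: sync_update_def)
  qed
  also have "\<dots> = measure_pmf.prob (sync_step R k n r par st) {st'. knows R \<mu> (st' w)}"
    by (simp add: sync_step_eq_map_pmf ps_def)
  finally show ?thesis .
qed

lemma exchange_support:
  assumes "is_vec_state R k st" "st' \<in> set_pmf (exchange R k u p st)"
  shows "is_vec_state R k st'" "\<And>w. knows R \<mu> (st w) \<Longrightarrow> knows R \<mu> (st' w)"
proof -
  obtain a b where ab: "a \<in> set_pmf (rand_comb R k (st u))" "b \<in> set_pmf (rand_comb R k (st p))"
    "st' = st(p := store R k (st p) a, u := store R k (st u) b)"
    using assms(2) by (auto simp: exchange_def)
  have "is_vec R k a" "is_vec R k b" using ab(1,2) assms(1) is_vec_rand_comb by (auto simp: is_vec_state_def)
  then show "is_vec_state R k st'" using assms(1) ab(3) by (auto simp: is_vec_state_def is_vec_list_store)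
  fix w assume "knows R \<mu> (st w)"
  then show "knows R \<mu> (st' w)" using ab(3) by (auto simp: knows_store_mono)
qed

lemma exchange_transfer_down:
  assumes wst: "is_vec_state R k st" and w\<mu>: "is_vec R k \<mu>" and kn: "knows R \<mu> (st p)"
  shows "measure_pmf.prob (exchange R k u p st) {st'. knows R \<mu> (st' u)} \<ge> 1 - 1 / q"
  unfolding exchange_def
proof (rule measure_bind_pmf_ge)
  fix a assume a: "a \<in> set_pmf (rand_comb R k (st u))"
  let ?F = "\<lambda>b. st(p := store R k (st p) a, u := store R k (st u) b)"
  have "1 - 1 / q \<le> measure_pmf.prob (rand_comb R k (st p)) {b. dot R \<mu> b \<noteq> \<zero>}"
    using rand_comb_not_orthogonal_prob wst w\<mu> kn by (auto simp: is_vec_state_def)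
  also have "\<dots> \<le> measure_pmf.prob (rand_comb R k (st p)) (?F -` {st'. knows R \<mu> (st' u)})"
  proof (rule measure_pmf_mono_support)
    fix b assume "b \<in> set_pmf (rand_comb R k (st p))" "b \<in> {b. dot R \<mu> b \<noteq> \<zero>}"
    then show "b \<in> ?F -` {st'. knows R \<mu> (st' u)}"
      using knows_store[OF w\<mu>] wst by (auto simp: is_vec_state_def)
  qed
  also have "\<dots> = measure_pmf.prob (bind_pmf (rand_comb R k (st p)) (\<lambda>b. return_pmf (?F b))) {st'. knows R \<mu> (st' u)}"
    by (simp add: map_pmf_def[symmetric])
  finally show "1 - 1 / q \<le> measure_pmf.prob (bind_pmf (rand_comb R k (st p)) (\<lambda>b. return_pmf (?F b))) {st'. knows R \<mu> (st' u)}" .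
qed

lemma exchange_transfer_up:
  assumes wst: "is_vec_state R k st" and w\<mu>: "is_vec R k \<mu>" and kn: "knows R \<mu> (st u)" and up: "u \<noteq> p"
  shows "measure_pmf.prob (exchange R k u p st) {st'. knows R \<mu> (st' p)} \<ge> 1 - 1 / q"
proof -
  have e: "exchange R k u p st = bind_pmf (rand_comb R k (st p)) (\<lambda>b. bind_pmf (rand_comb R k (st u)) (\<lambda>a.
     return_pmf (st(p := store R k (st p) a, u := store R k (st u) b))))"
    unfolding exchange_def by (rule bind_commute_pmf)
  show ?thesis unfolding e
  proof (rule measure_bind_pmf_ge)
    fix b assume b: "b \<in> set_pmf (rand_comb R k (st p))"
    let ?F = "\<lambda>a. st(p := store R k (st p) a, u := store R k (st u) b)"
    have "1 - 1 / q \<le> measure_pmf.prob (rand_comb R k (st u)) {a. dot R \<mu> a \<noteq> \<zero>}"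
      using rand_comb_not_orthogonal_prob wst w\<mu> kn by (auto simp: is_vec_state_def)
    also have "\<dots> \<le> measure_pmf.prob (rand_comb R k (st u)) (?F -` {st'. knows R \<mu> (st' p)})"
    proof (rule measure_pmf_mono_support)
      fix a assume "a \<in> set_pmf (rand_comb R k (st u))" "a \<in> {a. dot R \<mu> a \<noteq> \<zero>}"
      then show "a \<in> ?F -` {st'. knows R \<mu> (st' p)}"
        using knows_store[OF w\<mu>] wst up by (auto simp: is_vec_state_def)
    qed
    also have "\<dots> = measure_pmf.prob (bind_pmf (rand_comb R k (st u)) (\<lambda>a. return_pmf (?F a))) {st'. knows R \<mu> (st' p)}"
      by (simp add: map_pmf_def[symmetric])
    finally show "1 - 1 / q \<le> measure_pmf.prob (bind_pmf (rand_comb R k (st u)) (\<lambda>a. return_pmf (?F a))) {st'. knows R \<mu> (st' p)}" .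
  qed
qed

end

section \<open>Walks in the tree\<close>

locale tree_gossip = finite_nat_field R for R :: "nat ring" (structure) +
  fixes n r :: nat and par :: "nat \<Rightarrow> nat"
  assumes tree: "is_rooted_tree n r par"
begin

lemma root_less: "r < n" using tree by (simp add: is_rooted_tree_def)

lemma parent_less: "v < n \<Longrightarrow> v \<noteq> r \<Longrightarrow> par v < n" using tree by (simp add: is_rooted_tree_def)

lemma reaches_root: "v < n \<Longrightarrow> \<exists>m. (par ^^ m) v = r" using tree by (simp add: is_rooted_tree_def)

abbreviation dep :: "nat \<Rightarrow> nat" where "dep v \<equiv> depth par r v"

lemma funpow_depth_eq_root: "v < n \<Longrightarrow> (par ^^ dep v) v = r"
  unfolding depth_def using reaches_root by (rule LeastI_ex)

lemma funpow_less_depth_neq_root: "i < dep v \<Longrightarrow> (par ^^ i) v \<noteq> r"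
  unfolding depth_def using not_less_Least by blast

lemma ancestor_less: "v < n \<Longrightarrow> i \<le> dep v \<Longrightarrow> (par ^^ i) v < n"
proof (induction i)
  case 0 then show ?case by simp
next
  case (Suc i)
  then have "(par ^^ i) v < n" "(par ^^ i) v \<noteq> r" using funpow_less_depth_neq_root by auto
  then show ?case using parent_less by simp
qed

lemma depth_le_lmax: "v < n \<Longrightarrow> dep v \<le> lmax n r par"
  unfolding lmax_def by (rule Max_ge) auto

lemma parent_neq: "v < n \<Longrightarrow> v \<noteq> r \<Longrightarrow> par v \<noteq> v"
proof
  assume v: "v < n" "v \<noteq> r" "par v = v"
  then have "(par ^^ m) v = v" for m by (induction m) auto
  then show False using reaches_root[OF v(1)] v(2) by auto
qed

text \<open>\<open>tree_path s w\<close> is the walk from \<open>s\<close> up to the root and down to \<open>w\<close>;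
  \<open>edge_child s w j\<close> is the lower endpoint of its \<open>j\<close>-th edge, the node whose EXCHANGE
  uses that edge.\<close>
definition tree_path :: "nat \<Rightarrow> nat \<Rightarrow> nat \<Rightarrow> nat" where
  "tree_path s w j = (if j \<le> dep s then (par ^^ j) s else (par ^^ (dep s + dep w - j)) w)"

definition path_len :: "nat \<Rightarrow> nat \<Rightarrow> nat" where "path_len s w = dep s + dep w"

definition edge_child :: "nat \<Rightarrow> nat \<Rightarrow> nat \<Rightarrow> nat" where
  "edge_child s w j = (if j < dep s then tree_path s w j else tree_path s w (Suc j))"

lemma tree_path_0: "tree_path s w 0 = s" by (simp add: tree_path_def)

lemma tree_path_end: "s < n \<Longrightarrow> w < n \<Longrightarrow> tree_path s w (path_len s w) = w"
proof (cases "dep w = 0")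
  case True
  assume s: "s < n" and w: "w < n"
  have "w = r" using funpow_depth_eq_root[OF w] True by simp
  moreover have "(par ^^ dep s) s = r" using funpow_depth_eq_root s by simp
  ultimately show ?thesis using True by (simp add: tree_path_def path_len_def)
next
  case False
  then show ?thesis by (simp add: tree_path_def path_len_def)
qed

lemma tree_path_less: "s < n \<Longrightarrow> w < n \<Longrightarrow> j \<le> path_len s w \<Longrightarrow> tree_path s w j < n"
  by (auto simp: tree_path_def path_len_def intro!: ancestor_less)

lemma path_len_le: "s < n \<Longrightarrow> w < n \<Longrightarrow> path_len s w \<le> 2 * lmax n r par"
  using depth_le_lmax[of s] depth_le_lmax[of w] by (simp add: path_len_def)

lemma tree_path_edge:
  assumes s: "s < n" and w: "w < n" and j: "j < path_len s w"
  shows "(edge_child s w j \<noteq> r \<and> edge_child s w j = tree_path s w j \<and> par (edge_child s w j) = tree_path s w (Suc j)) \<or>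
         (edge_child s w j \<noteq> r \<and> edge_child s w j = tree_path s w (Suc j) \<and> par (edge_child s w j) = tree_path s w j)"
proof (cases "j < dep s")
  case True
  then have "edge_child s w j = (par ^^ j) s" "tree_path s w (Suc j) = par ((par ^^ j) s)" "tree_path s w j = (par ^^ j) s"
    by (auto simp: edge_child_def tree_path_def)
  moreover have "(par ^^ j) s \<noteq> r" using funpow_less_depth_neq_root True by blast
  ultimately show ?thesis by simp
next
  case False
  define i where "i = dep s + dep w - Suc j"
  have i: "i < dep w" "dep s + dep w - j = Suc i" using j False by (auto simp: i_def path_len_def)
  have "tree_path s w (Suc j) = (par ^^ i) w" using False by (simp add: tree_path_def i_def)
  moreover have "tree_path s w j = par ((par ^^ i) w)"
  proof (cases "j = dep s")
    case True
    have "tree_path s w j = r" using True funpow_depth_eq_root[OF s] by (simp add: tree_path_def)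
    moreover have "Suc i = dep w" using i True by simp
    then have "par ((par ^^ i) w) = r" using funpow_depth_eq_root[OF w] by (metis comp_apply funpow.simps(2))
    ultimately show ?thesis by simp
  next
    case False2: False
    then have "tree_path s w j = (par ^^ Suc i) w" using False i by (simp add: tree_path_def)
    then show ?thesis by simp
  qed
  moreover have "edge_child s w j = tree_path s w (Suc j)" using False by (simp add: edge_child_def)
  moreover have "(par ^^ i) w \<noteq> r" using funpow_less_depth_neq_root i by blast
  ultimately show ?thesis by simp
qed

end

lemma pmf_iter_Suc_front: "pmf_iter f (Suc t) s = bind_pmf (f s) (pmf_iter f t)"
proof (induction t arbitrary: s)
  case 0 then show ?case by (simp add: bind_return_pmf bind_return_pmf')
next
  case (Suc t)
  have "pmf_iter f (Suc (Suc t)) s = bind_pmf (pmf_iter f (Suc t) s) f" by (simp only: pmf_iter.simps)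
  also have "\<dots> = bind_pmf (bind_pmf (f s) (pmf_iter f t)) f" by (simp only: Suc)
  also have "\<dots> = bind_pmf (f s) (\<lambda>x. bind_pmf (pmf_iter f t x) f)" by (rule bind_assoc_pmf)
  also have "\<dots> = bind_pmf (f s) (pmf_iter f (Suc t))" by (rule arg_cong[where f="bind_pmf (f s)"]) (simp add: fun_eq_iff)
  finally show ?case .
qed

lemma pmf_iter_eq_run_schedule: "pmf_iter f T s = run_schedule (\<lambda>_. f) (replicate T ()) s"
proof (induction T arbitrary: s)
  case 0 then show ?case by simp
next
  case (Suc T)
  have "pmf_iter f T = run_schedule (\<lambda>_. f) (replicate T ())" using Suc.IH by (simp add: fun_eq_iff)
  then show ?case by (simp only: pmf_iter_Suc_front replicate_Suc run_schedule.simps)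
qed

lemma enough_trials_replicate: "L + m \<le> T + j \<Longrightarrow> enough_trials (\<lambda>_ _. True) L (replicate T ()) j m"
proof (induction T arbitrary: j m)
  case 0 then show ?case by (cases m) auto
next
  case (Suc T) then show ?case by (cases m) auto
qed

context tree_gossip
begin

definition progress :: "nat list \<Rightarrow> nat \<Rightarrow> nat \<Rightarrow> gstate \<Rightarrow> nat" where
  "progress \<mu> s w st = Max {j. j \<le> path_len s w \<and> knows R \<mu> (st (tree_path s w j))}"

lemma progress_ge: "j \<le> path_len s w \<Longrightarrow> knows R \<mu> (st (tree_path s w j)) \<Longrightarrow> j \<le> progress \<mu> s w st"
  unfolding progress_def by (rule Max_ge) auto

lemma progress_props:
  assumes "knows R \<mu> (st s)"
  shows "progress \<mu> s w st \<le> path_len s w" "knows R \<mu> (st (tree_path s w (progress \<mu> s w st)))"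
proof -
  have ne: "0 \<in> {j. j \<le> path_len s w \<and> knows R \<mu> (st (tree_path s w j))}" using assms by (simp add: tree_path_0)
  have "progress \<mu> s w st \<in> {j. j \<le> path_len s w \<and> knows R \<mu> (st (tree_path s w j))}"
    unfolding progress_def using ne by (intro Max_in) auto
  then show "progress \<mu> s w st \<le> path_len s w" "knows R \<mu> (st (tree_path s w (progress \<mu> s w st)))" by auto
qed

lemma progress_mono:
  assumes "knows R \<mu> (st s)" "\<And>v. knows R \<mu> (st v) \<Longrightarrow> knows R \<mu> (st' v)"
  shows "progress \<mu> s w st \<le> progress \<mu> s w st'"
  using progress_props[of \<mu> st s w, OF assms(1)] assms(2) by (intro progress_ge) auto

lemma progress_less_path_len:
  assumes "s < n" "w < n" "knows R \<mu> (st s)" "\<not> knows R \<mu> (st w)"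
  shows "progress \<mu> s w st < path_len s w"
proof -
  have "progress \<mu> s w st \<noteq> path_len s w" using progress_props[of \<mu> st s w, OF assms(3)] tree_path_end[OF assms(1,2)] assms(4) by auto
  then show ?thesis using progress_props[of \<mu> st s w, OF assms(3)] by simp
qed

definition theta :: real where "theta = 4 / (3 * q)"

text \<open>\<open>theta\<close> makes \<open>4 ^ (L - j) * theta ^ m\<close> a supermartingale of the progress \<open>j\<close>
  along a walk of length \<open>L\<close>.\<close>
lemma theta_props: "0 < theta" "theta \<le> 1" "(1 - 1 / q) / 4 + (1 / q) / theta \<le> 1"
  using q_ge2 by (auto simp: theta_def field_simps)

lemma run_schedule_not_knows_prob:
  fixes g :: "'l \<Rightarrow> gstate \<Rightarrow> gstate pmf"
  assumes support: "\<And>v st st'. is_vec_state R k st \<Longrightarrow> st' \<in> set_pmf (g v st) \<Longrightarrow>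
        is_vec_state R k st' \<and> (\<forall>x. knows R \<mu> (st x) \<longrightarrow> knows R \<mu> (st' x))"
    and transfer: "\<And>v st j. is_vec_state R k st \<Longrightarrow> j < path_len s w \<Longrightarrow> H v j \<Longrightarrow>
        knows R \<mu> (st (tree_path s w j)) \<Longrightarrow>
        1 - 1 / q \<le> measure_pmf.prob (g v st) {st'. knows R \<mu> (st' (tree_path s w (Suc j)))}"
    and st0: "is_vec_state R k st0" "knows R \<mu> (st0 s)" and s: "s < n" and w: "w < n"
    and trials: "enough_trials H (path_len s w) \<sigma> 0 m"
  shows "measure_pmf.prob (run_schedule g \<sigma> st0) {st. \<not> knows R \<mu> (st w)} \<le> 4 ^ path_len s w * theta ^ m"
proof -
  define I where "I st \<longleftrightarrow> is_vec_state R k st \<and> knows R \<mu> (st s)" for st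
  let ?p = "progress \<mu> s w" and ?L = "path_len s w"
  have inv: "I st' \<and> ?p st \<le> ?p st'" if "I st" "st' \<in> set_pmf (g v st)" for v st st'
  proof -
    have "is_vec_state R k st'" "\<And>x. knows R \<mu> (st x) \<Longrightarrow> knows R \<mu> (st' x)"
      using support[OF _ that(2)] that(1) by (auto simp: I_def)
    then show ?thesis using that(1) progress_mono[of \<mu> st s st' w] by (simp add: I_def)
  qed
  have advance: "1 - 1 / q \<le> measure_pmf.prob (g v st) {st'. ?p st < ?p st'}"
    if "I st" "?p st < ?L" "H v (?p st)" for v st
  proof -
    have "1 - 1 / q \<le> measure_pmf.prob (g v st) {st'. knows R \<mu> (st' (tree_path s w (Suc (?p st))))}"
      using transfer that progress_props(2)[of \<mu> st s w] by (auto simp: I_def)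
    also have "\<dots> \<le> measure_pmf.prob (g v st) {st'. ?p st < ?p st'}"
    proof (rule measure_pmf_mono_support)
      fix st' assume "st' \<in> {st'. knows R \<mu> (st' (tree_path s w (Suc (?p st))))}"
      then have "Suc (?p st) \<le> ?p st'" using that(2) by (intro progress_ge) auto
      then show "st' \<in> {st'. ?p st < ?p st'}" by simp
    qed
    finally show ?thesis .
  qed
  have I0: "I st0" using st0 by (simp add: I_def)
  have "measure_pmf.prob (run_schedule g \<sigma> st0) {st. \<not> knows R \<mu> (st w)}
      \<le> measure_pmf.prob (run_schedule g \<sigma> st0) {st. ?p st < ?L}"
  proof (rule measure_pmf_mono_support)
    fix st assume st: "st \<in> set_pmf (run_schedule g \<sigma> st0)" "st \<in> {st. \<not> knows R \<mu> (st w)}"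
    have "I st \<and> ?p st0 \<le> ?p st"
      by (rule run_schedule_invariant[where I=I and g=g and \<phi> = ?p]) (use inv I0 st(1) in blast)+
    then have "I st" ..
    then show "st \<in> {st. ?p st < ?L}"
      using st(2) progress_less_path_len[OF s w] by (simp add: I_def)
  qed
  also have "\<dots> \<le> 4 ^ (?L - ?p st0) * theta ^ m"
  proof (rule run_schedule_progress_tail[where I=I and H=H and a=4 and \<epsilon>="1/q"])
    show "\<And>v st st'. I st \<Longrightarrow> st' \<in> set_pmf (g v st) \<Longrightarrow> I st' \<and> ?p st \<le> ?p st'"
      by (rule inv)
    show "\<And>v st. I st \<Longrightarrow> ?p st < ?L \<Longrightarrow> H v (?p st) \<Longrightarrow>
        1 - 1 / q \<le> measure_pmf.prob (g v st) {st'. ?p st < ?p st'}"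
      by (rule advance)
    show "0 < theta" "theta \<le> 1" "(1 - 1 / q) / 4 + 1 / q / theta \<le> 1" by (fact theta_props)+
    show "0 \<le> 1 / q" "1 / q \<le> 1" using q_ge2 by simp_all
    show "enough_trials H ?L \<sigma> (?p st0) m" using enough_trials_mono_progress[OF trials] by simp
  qed (use I0 in simp_all)
  also have "\<dots> \<le> 4 ^ ?L * theta ^ m"
    using theta_props by (intro mult_right_mono power_increasing) auto
  finally show ?thesis .
qed

definition async_act :: "nat \<Rightarrow> nat \<Rightarrow> gstate \<Rightarrow> gstate pmf" where
  "async_act k v st = (if v = r then return_pmf st else exchange R k v (par v) st)"

lemma async_step_eq_bind: "async_step R k n r par st = bind_pmf (pmf_of_set {..<n}) (\<lambda>v. async_act k v st)"
  by (simp add: async_step_def async_act_def)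

lemma async_act_support:
  assumes "is_vec_state R k st" "st' \<in> set_pmf (async_act k v st)"
  shows "is_vec_state R k st'" "\<And>x. knows R \<mu> (st x) \<Longrightarrow> knows R \<mu> (st' x)"
  using assms exchange_support[OF assms(1), of st'] by (auto simp: async_act_def split: if_splits)

lemma async_act_transfer:
  assumes st: "is_vec_state R k st" and w\<mu>: "is_vec R k \<mu>" and s: "s < n" and w: "w < n" and j: "j < path_len s w"
    and kn: "knows R \<mu> (st (tree_path s w j))"
  shows "measure_pmf.prob (async_act k (edge_child s w j) st) {st'. knows R \<mu> (st' (tree_path s w (Suc j)))} \<ge> 1 - 1 / q"
proof -
  have cl: "edge_child s w j < n" using tree_path_less[OF s w] j by (auto simp: edge_child_def)
  from tree_path_edge[OF s w j] show ?thesis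
  proof
    assume e: "edge_child s w j \<noteq> r \<and> edge_child s w j = tree_path s w j \<and> par (edge_child s w j) = tree_path s w (Suc j)"
    have c: "edge_child s w j = tree_path s w j" and p: "tree_path s w (Suc j) = par (tree_path s w j)" and nr: "tree_path s w j \<noteq> r"
      using e by auto
    have "tree_path s w j \<noteq> par (tree_path s w j)" using parent_neq cl e by metis
    then have "1 - 1 / q \<le> measure_pmf.prob (exchange R k (tree_path s w j) (par (tree_path s w j)) st) {st'. knows R \<mu> (st' (par (tree_path s w j)))}"
      using exchange_transfer_up[OF st w\<mu> kn] by blast
    then show ?thesis by (simp only: async_act_def c p nr if_False)
  next
    assume e: "edge_child s w j \<noteq> r \<and> edge_child s w j = tree_path s w (Suc j) \<and> par (edge_child s w j) = tree_path s w j"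
    have c: "edge_child s w j = tree_path s w (Suc j)" and p: "tree_path s w j = par (tree_path s w (Suc j))" and nr: "tree_path s w (Suc j) \<noteq> r"
      using e by auto
    have kn': "knows R \<mu> (st (par (tree_path s w (Suc j))))" using kn p by simp
    have "1 - 1 / q \<le> measure_pmf.prob (exchange R k (tree_path s w (Suc j)) (par (tree_path s w (Suc j))) st) {st'. knows R \<mu> (st' (tree_path s w (Suc j)))}"
      using exchange_transfer_down[OF st w\<mu> kn'] by blast
    then show ?thesis by (simp only: async_act_def c nr if_False)
  qed
qed

lemma sync_transfer_path:
  assumes st: "is_vec_state R k st" and w\<mu>: "is_vec R k \<mu>" and s: "s < n" and w: "w < n" and j: "j < path_len s w"
    and kn: "knows R \<mu> (st (tree_path s w j))"
  shows "measure_pmf.prob (sync_step R k n r par st) {st'. knows R \<mu> (st' (tree_path s w (Suc j)))} \<ge> 1 - 1 / q"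
proof -
  have cl: "edge_child s w j < n" using tree_path_less[OF s w] j by (auto simp: edge_child_def)
  have wl: "tree_path s w (Suc j) < n" using tree_path_less[OF s w] j by auto
  from tree_path_edge[OF s w j] show ?thesis
  proof
    assume e: "edge_child s w j \<noteq> r \<and> edge_child s w j = tree_path s w j \<and> par (edge_child s w j) = tree_path s w (Suc j)"
    then show ?thesis using sync_transfer[OF st w\<mu> wl, of "tree_path s w j"] kn cl by auto
  next
    assume e: "edge_child s w j \<noteq> r \<and> edge_child s w j = tree_path s w (Suc j) \<and> par (edge_child s w j) = tree_path s w j"
    then show ?thesis using sync_transfer[OF st w\<mu> wl, of "tree_path s w j"] kn cl by auto
  qed
qed

lemma async_path_bound:
  assumes "is_vec_state R k st0" "knows R \<mu> (st0 s)" "is_vec R k \<mu>" "s < n" "w < n"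
    and "enough_trials (\<lambda>v j. v = edge_child s w j) (path_len s w) \<sigma> 0 m"
  shows "measure_pmf.prob (run_schedule (async_act k) \<sigma> st0) {st. \<not> knows R \<mu> (st w)}
    \<le> 4 ^ path_len s w * theta ^ m"
  using assms async_act_support async_act_transfer
  by (intro run_schedule_not_knows_prob[where H="\<lambda>v j. v = edge_child s w j"]) blast+

lemma sync_path_bound:
  assumes "is_vec_state R k st0" "knows R \<mu> (st0 s)" "is_vec R k \<mu>" "s < n" "w < n"
    and "path_len s w + m \<le> T"
  shows "measure_pmf.prob (pmf_iter (sync_step R k n r par) T st0) {st. \<not> knows R \<mu> (st w)}
    \<le> 4 ^ path_len s w * theta ^ m"
  unfolding pmf_iter_eq_run_schedule
  using assms sync_step_support sync_transfer_path enough_trials_replicate[of "path_len s w" m T 0]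
  by (intro run_schedule_not_knows_prob[where H="\<lambda>_ _. True"]) auto

end

section \<open>Random schedules\<close>

primrec iid_pmf :: "'a pmf \<Rightarrow> nat \<Rightarrow> 'a list pmf" where
  "iid_pmf U 0 = return_pmf []"
| "iid_pmf U (Suc T) = bind_pmf U (\<lambda>v. map_pmf (Cons v) (iid_pmf U T))"

lemma pmf_iter_random_schedule: "pmf_iter (\<lambda>s. bind_pmf U (\<lambda>v. g v s)) T s = bind_pmf (iid_pmf U T) (\<lambda>\<sigma>. run_schedule g \<sigma> s)"
proof (induction T arbitrary: s)
  case 0 then show ?case by (simp add: bind_return_pmf)
next
  case (Suc T)
  have "pmf_iter (\<lambda>s. bind_pmf U (\<lambda>v. g v s)) (Suc T) s =
        bind_pmf (bind_pmf U (\<lambda>v. g v s)) (pmf_iter (\<lambda>s. bind_pmf U (\<lambda>v. g v s)) T)"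
    by (rule pmf_iter_Suc_front)
  also have "\<dots> = bind_pmf U (\<lambda>v. bind_pmf (g v s) (\<lambda>s'. bind_pmf (iid_pmf U T) (\<lambda>\<sigma>. run_schedule g \<sigma> s')))"
  proof -
    have eq: "pmf_iter (\<lambda>s. bind_pmf U (\<lambda>v. g v s)) T = (\<lambda>s'. bind_pmf (iid_pmf U T) (\<lambda>\<sigma>. run_schedule g \<sigma> s'))"
      using Suc.IH by (simp add: fun_eq_iff)
    show ?thesis by (simp add: bind_assoc_pmf eq)
  qed
  also have "\<dots> = bind_pmf U (\<lambda>v. bind_pmf (iid_pmf U T) (\<lambda>\<sigma>. bind_pmf (g v s) (run_schedule g \<sigma>)))"
    by (subst bind_commute_pmf) simp
  also have "\<dots> = bind_pmf (iid_pmf U (Suc T)) (\<lambda>\<sigma>. run_schedule g \<sigma> s)"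
    by (simp add: map_pmf_def bind_assoc_pmf bind_return_pmf)
  finally show ?case .
qed

lemma measure_bind_pmf_le_plus_indicator:
  assumes "\<And>x. x \<in> set_pmf p \<Longrightarrow> measure_pmf.prob (f x) A \<le> c + indicator B x" and c: "0 \<le> c"
  shows "measure_pmf.prob (bind_pmf p f) A \<le> c + measure_pmf.prob p B"
proof -
  have "measure_pmf.prob (bind_pmf p f) A = (\<integral>x. measure_pmf.prob (f x) A \<partial>measure_pmf p)"
    by (rule measure_bind_pmf_eq_integral)
  also have "\<dots> \<le> (\<integral>x. c + indicator B x \<partial>measure_pmf p)"
    using assms(1) c
    by (intro integral_mono_AE integrable_pmf_bounded[where B="1 + c"])
       (auto simp: AE_measure_pmf_iff split: split_indicator intro: order_trans[OF measure_pmf.prob_le_1])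
  also have "\<dots> = c + measure_pmf.prob p B"
    by (subst Bochner_Integration.integral_add) (auto intro!: integrable_pmf_bounded[where B="1 + c"] simp: c split: split_indicator)
  finally show ?thesis .
qed

lemma vimage_Cons_not_enough_trials:
  "\<not> L \<le> j \<Longrightarrow> Cons v -` {\<sigma>. \<not> enough_trials H L \<sigma> j (Suc m)} =
    (if H v j then {\<sigma>. \<not> enough_trials H L \<sigma> (Suc j) (Suc m)} \<union> {\<sigma>. \<not> enough_trials H L \<sigma> j m}
     else {\<sigma>. \<not> enough_trials H L \<sigma> j (Suc m)})"
  by auto

text \<open>At a step offering a trial the bad event splits into the success and the failure
  branch, each bounded by a quarter of the current bound; as a trial is offered with
  probability at least \<open>h\<close>, the bound decays by \<open>1 - h / 2\<close> per step.\<close>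
lemma not_enough_trials_prob:
  fixes h :: real
  assumes hU: "\<And>j. j < L \<Longrightarrow> measure_pmf.prob U {v. H v j} \<ge> h" and h: "0 \<le> h" "h \<le> 1"
  shows "measure_pmf.prob (iid_pmf U T) {\<sigma>. \<not> enough_trials H L \<sigma> j m}
    \<le> 4 ^ (L - j) * 4 ^ m * (1 - h / 2) ^ T"
proof (induction T arbitrary: j m)
  case 0
  have "measure_pmf.prob (iid_pmf U 0) {\<sigma>. \<not> enough_trials H L \<sigma> j m} \<le> 1"
    by (rule measure_pmf.prob_le_1)
  also have "1 \<le> (4::real) ^ (L - j) * 4 ^ m * (1 - h / 2) ^ 0"
    using mult_mono[OF one_le_power[of "4::real" "L - j"] one_le_power[of "4::real" m]] by simp
  finally show ?case .
next
  case (Suc T)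
  let ?B = "4 ^ (L - j) * 4 ^ m * (1 - h / 2) ^ T :: real"
  have "?B \<ge> 0" using h by simp
  show ?case
  proof (cases "m = 0 \<or> L \<le> j")
    case True
    then have "enough_trials H L \<sigma> j m" for \<sigma> by (cases m; cases \<sigma>) auto
    then have "{\<sigma>. \<not> enough_trials H L \<sigma> j m} = {}" by simp
    then show ?thesis using h by simp
  next
    case False
    then obtain m' where m: "m = Suc m'" and nL: "\<not> L \<le> j" by (cases m) auto
    have step: "measure_pmf.prob (map_pmf (Cons v) (iid_pmf U T)) {\<sigma>. \<not> enough_trials H L \<sigma> j m}
        \<le> (if H v j then ?B / 2 else ?B)" for v
    proof (cases "H v j")
      case True
      have "measure_pmf.prob (map_pmf (Cons v) (iid_pmf U T)) {\<sigma>. \<not> enough_trials H L \<sigma> j m}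
          \<le> measure_pmf.prob (iid_pmf U T) {\<sigma>. \<not> enough_trials H L \<sigma> (Suc j) m}
            + measure_pmf.prob (iid_pmf U T) {\<sigma>. \<not> enough_trials H L \<sigma> j m'}"
        unfolding m measure_map_pmf vimage_Cons_not_enough_trials[OF nL] if_P[OF True]
        by (rule measure_Un_le) auto
      also have "\<dots> \<le> 4 ^ (L - Suc j) * 4 ^ m * (1 - h / 2) ^ T + 4 ^ (L - j) * 4 ^ m' * (1 - h / 2) ^ T"
        by (intro add_mono Suc.IH)
      also have "\<dots> = ?B / 2"
      proof -
        have "(4::real) ^ (L - j) = 4 * 4 ^ (L - Suc j)"
          using nL by (metis Suc_diff_Suc not_le power_Suc)
        then show ?thesis by (simp add: m)
      qed
      finally show ?thesis using True by simp
    next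
      case False
      then show ?thesis using nL Suc.IH[of j m] by (simp add: m vimage_Cons_not_enough_trials)
    qed
    have "measure_pmf.prob (iid_pmf U (Suc T)) {\<sigma>. \<not> enough_trials H L \<sigma> j m}
        \<le> h * (?B / 2) + (1 - h) * ?B"
      unfolding iid_pmf.simps
    proof (rule measure_bind_pmf_le_mixture[where Q="\<lambda>v. H v j"])
      show "measure_pmf.prob (map_pmf (Cons v) (iid_pmf U T)) {\<sigma>. \<not> enough_trials H L \<sigma> j m} \<le> ?B / 2"
        if "H v j" for v
        using step[of v] that by simp
      show "measure_pmf.prob (map_pmf (Cons v) (iid_pmf U T)) {\<sigma>. \<not> enough_trials H L \<sigma> j m} \<le> ?B"
        for v
        using step[of v] \<open>?B \<ge> 0\<close> by (auto split: if_splits)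
      show "?B / 2 \<le> ?B" using \<open>?B \<ge> 0\<close> by linarith
      show "h \<le> measure_pmf.prob U {v. H v j}" using hU nL by simp
    qed
    also have "\<dots> = 4 ^ (L - j) * 4 ^ m * (1 - h / 2) ^ Suc T" by (simp add: algebra_simps)
    finally show ?thesis .
  qed
qed

context tree_gossip
begin

definition nonzero_vecs :: "nat \<Rightarrow> nat list set" where "nonzero_vecs k = {\<mu>. is_vec R k \<mu> \<and> \<mu> \<noteq> vzero R k}"

lemma nonzero_vecs_subset: "nonzero_vecs k \<subseteq> {xs. set xs \<subseteq> carrier R \<and> length xs = k}"
  by (auto simp: nonzero_vecs_def is_vec_def)

lemma finite_nonzero_vecs: "finite (nonzero_vecs k)"
  using finite_subset[OF nonzero_vecs_subset finite_lists_length_eq[OF fin]] .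

lemma card_nonzero_vecs_le: "real (card (nonzero_vecs k)) \<le> q ^ k"
proof -
  have "card (nonzero_vecs k) \<le> card {xs. set xs \<subseteq> carrier R \<and> length xs = k}"
    by (rule card_mono[OF finite_lists_length_eq[OF fin] nonzero_vecs_subset])
  also have "\<dots> = card (carrier R) ^ k" by (rule card_lists_length_eq[OF fin])
  finally show ?thesis unfolding q_def by (metis of_nat_le_iff of_nat_power)
qed

definition source :: "nat \<Rightarrow> (nat \<Rightarrow> nat) \<Rightarrow> nat list \<Rightarrow> nat" where
  "source k loc \<mu> = loc (LEAST i. i < k \<and> \<mu> ! i \<noteq> \<zero>)"

lemma nonzero_vecs_nth_neq_zero: "\<mu> \<in> nonzero_vecs k \<Longrightarrow> \<exists>i<k. \<mu> ! i \<noteq> \<zero>"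
proof (rule ccontr)
  assume a: "\<mu> \<in> nonzero_vecs k" "\<not> (\<exists>i<k. \<mu> ! i \<noteq> \<zero>)"
  then have "\<mu> = vzero R k" by (intro list_eq_by_nth[of _ k]) (auto simp: nonzero_vecs_def is_vec_def)
  then show False using a by (simp add: nonzero_vecs_def)
qed

lemma is_vec_state_init: "is_vec_state R k (init_state R k loc)"
  by (auto simp: is_vec_state_def is_vec_list_def init_state_def)

lemma source_init:
  assumes loc: "\<forall>i<k. loc i < n" and \<mu>: "\<mu> \<in> nonzero_vecs k"
  shows "source k loc \<mu> < n" "knows R \<mu> (init_state R k loc (source k loc \<mu>))"
proof -
  define i0 where "i0 = (LEAST i. i < k \<and> \<mu> ! i \<noteq> \<zero>)"
  have i0: "i0 < k" "\<mu> ! i0 \<noteq> \<zero>"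
    using nonzero_vecs_nth_neq_zero[OF \<mu>] unfolding i0_def by (metis (mono_tags, lifting) LeastI)+
  then show "source k loc \<mu> < n" using loc by (simp add: source_def i0_def[symmetric])
  have "unitv R k i0 \<in> set (init_state R k loc (loc i0))" using i0 by (auto simp: init_state_def)
  moreover have "dot R \<mu> (unitv R k i0) \<noteq> \<zero>" using i0 \<mu> by (simp add: dot_unitv nonzero_vecs_def)
  ultimately show "knows R \<mu> (init_state R k loc (source k loc \<mu>))"
    unfolding knows_def source_def i0_def[symmetric] by blast
qed

lemma unknown_if_not_all_learned:
  assumes "is_vec_state R k st" "\<not> all_learned R k n st"
  shows "\<exists>\<mu>\<in>nonzero_vecs k. \<exists>w<n. \<not> knows R \<mu> (st w)"
proof -
  obtain w where w: "w < n" "\<not> learned_all R k (st w)" using assms(2) by (auto simp: all_learned_def)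
  then have "\<not> (\<forall>\<mu>. is_vec R k \<mu> \<and> \<mu> \<noteq> vzero R k \<longrightarrow> knows R \<mu> (st w))"
    using learned_all_if_knows_all[of k "st w"] assms(1) by (auto simp: is_vec_state_def)
  then show ?thesis using w by (auto simp: nonzero_vecs_def)
qed

lemma four_pow_path_len_le: "s < n \<Longrightarrow> w < n \<Longrightarrow> (4::real) ^ path_len s w \<le> 16 ^ lmax n r par"
  using power_increasing[of "path_len s w" "2 * lmax n r par" "4::real"] path_len_le
  by (simp add: power_mult)

lemma not_all_learned_prob_le:
  assumes "\<And>st. st \<in> set_pmf p \<Longrightarrow> is_vec_state R k st"
    and "\<And>\<mu> w. \<mu> \<in> nonzero_vecs k \<Longrightarrow> w < n \<Longrightarrow> measure_pmf.prob p {st. \<not> knows R \<mu> (st w)} \<le> b"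
  shows "measure_pmf.prob p {st. \<not> all_learned R k n st} \<le> real (card (nonzero_vecs k)) * n * b"
proof -
  let ?I = "nonzero_vecs k \<times> {..<n}"
  let ?A = "\<lambda>(\<mu>, w). {st. \<not> knows R \<mu> (st w)}"
  have "measure_pmf.prob p {st. \<not> all_learned R k n st} \<le> measure_pmf.prob p (\<Union>i\<in>?I. ?A i)"
    by (rule measure_pmf_mono_support) (use assms(1) unknown_if_not_all_learned in fastforce)
  also have "\<dots> \<le> (\<Sum>i\<in>?I. measure_pmf.prob p (?A i))"
    by (rule measure_pmf.finite_measure_subadditive_finite) (auto simp: finite_nonzero_vecs)
  also have "\<dots> \<le> (\<Sum>i\<in>?I. b)"
    by (intro sum_mono) (use assms(2) in auto)
  also have "\<dots> = real (card (nonzero_vecs k)) * n * b" by (simp add: card_cartesian_product)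
  finally show ?thesis .
qed

lemma sync_failure_prob_le:
  assumes loc: "\<forall>i<k. loc i < n" and T: "2 * lmax n r par + m \<le> T"
  shows "measure_pmf.prob (pmf_iter (sync_step R k n r par) T (init_state R k loc))
      {st. \<not> all_learned R k n st} \<le> real (card (nonzero_vecs k)) * n * (16 ^ lmax n r par * theta ^ m)"
proof (rule not_all_learned_prob_le)
  show "is_vec_state R k st" if "st \<in> set_pmf (pmf_iter (sync_step R k n r par) T (init_state R k loc))" for st
    by (rule run_schedule_preserves[where I="is_vec_state R k" and g="\<lambda>_. sync_step R k n r par"])
       (use sync_step_support(1) is_vec_state_init that[unfolded pmf_iter_eq_run_schedule] in blast)+
next
  fix \<mu> w assume \<mu>: "\<mu> \<in> nonzero_vecs k" and w: "w < n"
  note src = source_init[OF loc \<mu>]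
  have "measure_pmf.prob (pmf_iter (sync_step R k n r par) T (init_state R k loc)) {st. \<not> knows R \<mu> (st w)}
        \<le> 4 ^ path_len (source k loc \<mu>) w * theta ^ m"
    using src \<mu> w T path_len_le[of "source k loc \<mu>" w]
    by (intro sync_path_bound is_vec_state_init) (auto simp: nonzero_vecs_def)
  also have "\<dots> \<le> 16 ^ lmax n r par * theta ^ m"
    using four_pow_path_len_le[of "source k loc \<mu>" w] src w theta_props by (intro mult_right_mono) auto
  finally show "measure_pmf.prob (pmf_iter (sync_step R k n r par) T (init_state R k loc))
      {st. \<not> knows R \<mu> (st w)} \<le> 16 ^ lmax n r par * theta ^ m" .
qed

lemma n_pos: "0 < n" using root_less by simp

lemma edge_child_less: "s < n \<Longrightarrow> w < n \<Longrightarrow> j < path_len s w \<Longrightarrow> edge_child s w j < n"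
  using tree_path_less by (auto simp: edge_child_def)

lemma run_async_failure_prob_le:
  assumes loc: "\<forall>i<k. loc i < n"
    and trials: "\<forall>s<n. \<forall>w<n. enough_trials (\<lambda>v j. v = edge_child s w j) (path_len s w) \<sigma> 0 m"
  shows "measure_pmf.prob (run_schedule (async_act k) \<sigma> (init_state R k loc))
      {st. \<not> all_learned R k n st} \<le> real (card (nonzero_vecs k)) * n * (16 ^ lmax n r par * theta ^ m)"
proof (rule not_all_learned_prob_le)
  show "is_vec_state R k st" if "st \<in> set_pmf (run_schedule (async_act k) \<sigma> (init_state R k loc))" for st
    by (rule run_schedule_preserves[where I="is_vec_state R k" and g="async_act k"])
       (use async_act_support(1) is_vec_state_init that in blast)+
next
  fix \<mu> w assume \<mu>: "\<mu> \<in> nonzero_vecs k" and w: "w < n"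
  note src = source_init[OF loc \<mu>]
  have "measure_pmf.prob (run_schedule (async_act k) \<sigma> (init_state R k loc)) {st. \<not> knows R \<mu> (st w)}
        \<le> 4 ^ path_len (source k loc \<mu>) w * theta ^ m"
    using src \<mu> w trials by (intro async_path_bound is_vec_state_init) (auto simp: nonzero_vecs_def)
  also have "\<dots> \<le> 16 ^ lmax n r par * theta ^ m"
    using four_pow_path_len_le[of "source k loc \<mu>" w] src w theta_props by (intro mult_right_mono) auto
  finally show "measure_pmf.prob (run_schedule (async_act k) \<sigma> (init_state R k loc))
      {st. \<not> knows R \<mu> (st w)} \<le> 16 ^ lmax n r par * theta ^ m" .
qed

lemma schedule_lacks_trials_prob_le:
  "measure_pmf.prob (iid_pmf (pmf_of_set {..<n}) T)
      {\<sigma>. \<exists>s<n. \<exists>w<n. \<not> enough_trials (\<lambda>v j. v = edge_child s w j) (path_len s w) \<sigma> 0 m}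
    \<le> real n * n * (16 ^ lmax n r par * 4 ^ m * (1 - 1 / (2 * n)) ^ T)"
proof -
  let ?U = "pmf_of_set {..<n}" and ?I = "{..<n} \<times> {..<n}"
  let ?A = "\<lambda>(s, w). {\<sigma>. \<not> enough_trials (\<lambda>v j. v = edge_child s w j) (path_len s w) \<sigma> 0 m}"
  have "{\<sigma>. \<exists>s<n. \<exists>w<n. \<not> enough_trials (\<lambda>v j. v = edge_child s w j) (path_len s w) \<sigma> 0 m}
      = (\<Union>i\<in>?I. ?A i)" by auto
  then have "measure_pmf.prob (iid_pmf ?U T)
        {\<sigma>. \<exists>s<n. \<exists>w<n. \<not> enough_trials (\<lambda>v j. v = edge_child s w j) (path_len s w) \<sigma> 0 m}
      \<le> (\<Sum>i\<in>?I. measure_pmf.prob (iid_pmf ?U T) (?A i))"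
    by (simp add: measure_pmf.finite_measure_subadditive_finite)
  also have "\<dots> \<le> (\<Sum>i\<in>?I. 16 ^ lmax n r par * 4 ^ m * (1 - 1 / (2 * n)) ^ T)"
  proof (rule sum_mono, clarify)
    fix s w assume sw: "s < n" "w < n"
    have "1 / real n \<le> measure_pmf.prob ?U {v. v = edge_child s w j}" if "j < path_len s w" for j
      using edge_child_less[OF sw that] n_pos
      by (simp add: measure_pmf_single pmf_of_set lessThan_empty_iff)
    then have "measure_pmf.prob (iid_pmf ?U T)
        {\<sigma>. \<not> enough_trials (\<lambda>v j. v = edge_child s w j) (path_len s w) \<sigma> 0 m}
        \<le> 4 ^ (path_len s w - 0) * 4 ^ m * (1 - (1 / real n) / 2) ^ T"
      using n_pos by (intro not_enough_trials_prob[where h="1 / real n"]) auto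
    also have "\<dots> \<le> 16 ^ lmax n r par * 4 ^ m * (1 - 1 / (2 * n)) ^ T"
    proof -
      have e: "1 - 1 / real n / 2 = 1 - 1 / real (2 * n)" by simp
      have "0 \<le> 1 - 1 / real (2 * n)" using n_pos by (simp add: field_simps)
      then show ?thesis unfolding e minus_nat.diff_0
        using four_pow_path_len_le[OF sw] by (intro mult_right_mono) auto
    qed
    finally show "measure_pmf.prob (iid_pmf ?U T)
        {\<sigma>. \<not> enough_trials (\<lambda>v j. v = edge_child s w j) (path_len s w) \<sigma> 0 m}
        \<le> 16 ^ lmax n r par * 4 ^ m * (1 - 1 / (2 * n)) ^ T" .
  qed
  also have "\<dots> = real n * n * (16 ^ lmax n r par * 4 ^ m * (1 - 1 / (2 * n)) ^ T)"
    by (simp add: card_cartesian_product)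
  finally show ?thesis .
qed

text \<open>Draw the schedule of activated nodes first; a schedule offering enough trials on every
  walk is handled like the synchronous case.\<close>
lemma async_failure_prob_le:
  assumes loc: "\<forall>i<k. loc i < n"
  shows "measure_pmf.prob (pmf_iter (async_step R k n r par) T (init_state R k loc))
      {st. \<not> all_learned R k n st}
    \<le> real (card (nonzero_vecs k)) * n * (16 ^ lmax n r par * theta ^ m)
      + real n * n * (16 ^ lmax n r par * 4 ^ m * (1 - 1 / (2 * n)) ^ T)"
proof -
  define bad where "bad = {\<sigma>. \<exists>s<n. \<exists>w<n.
      \<not> enough_trials (\<lambda>v j. v = edge_child s w j) (path_len s w) \<sigma> 0 m}"
  define C where "C = real (card (nonzero_vecs k)) * n * (16 ^ lmax n r par * theta ^ m)"
  have C: "0 \<le> C" using theta_props by (simp add: C_def)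
  have "async_step R k n r par = (\<lambda>st. bind_pmf (pmf_of_set {..<n}) (\<lambda>v. async_act k v st))"
    by (simp add: fun_eq_iff async_step_eq_bind)
  then have "measure_pmf.prob (pmf_iter (async_step R k n r par) T (init_state R k loc))
      {st. \<not> all_learned R k n st}
    = measure_pmf.prob (bind_pmf (iid_pmf (pmf_of_set {..<n}) T)
        (\<lambda>\<sigma>. run_schedule (async_act k) \<sigma> (init_state R k loc))) {st. \<not> all_learned R k n st}"
    by (simp add: pmf_iter_random_schedule)
  also have "\<dots> \<le> C + measure_pmf.prob (iid_pmf (pmf_of_set {..<n}) T) bad"
  proof (rule measure_bind_pmf_le_plus_indicator[OF _ C])
    fix \<sigma>
    have "\<sigma> \<notin> bad \<Longrightarrow> measure_pmf.prob (run_schedule (async_act k) \<sigma> (init_state R k loc))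
        {st. \<not> all_learned R k n st} \<le> C"
      unfolding C_def bad_def by (rule run_async_failure_prob_le[OF loc]) blast
    then show "measure_pmf.prob (run_schedule (async_act k) \<sigma> (init_state R k loc))
        {st. \<not> all_learned R k n st} \<le> C + indicator bad \<sigma>"
      using C measure_pmf.prob_le_1 by (cases "\<sigma> \<in> bad") (auto intro: add_increasing)
  qed
  also have "\<dots> \<le> C + real n * n * (16 ^ lmax n r par * 4 ^ m * (1 - 1 / (2 * n)) ^ T)"
    unfolding bad_def using schedule_lacks_trials_prob_le by simp
  finally show ?thesis unfolding C_def .
qed

end

section \<open>Choice of the parameters\<close>

lemma one_le_ln: "3 \<le> n \<Longrightarrow> 1 \<le> ln (real n)"
proof -
  assume "3 \<le> n"
  then have "exp 1 \<le> real n" using exp_le by linarith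
  then show ?thesis using ln_ge_iff[of "real n" 1] by (metis exp_gt_zero less_le_trans ln_exp ln_le_cancel_iff)
qed

lemma ceiling_ln_bounds:
  assumes "3 \<le> n"
  shows "real (nat \<lceil>ln (real n)\<rceil>) \<le> 2 * ln (real n)" "real n \<le> exp (real (nat \<lceil>ln (real n)\<rceil>))"
proof -
  have l1: "1 \<le> ln (real n)" using one_le_ln[OF assms] .
  have cr: "real (nat \<lceil>ln (real n)\<rceil>) = real_of_int \<lceil>ln (real n)\<rceil>" using l1 by simp
  show "real (nat \<lceil>ln (real n)\<rceil>) \<le> 2 * ln (real n)"
    unfolding cr using l1 ceiling_le_iff[of "ln (real n)"] by linarith
  have "real n = exp (ln (real n))" using assms by simp
  also have "\<dots> \<le> exp (real (nat \<lceil>ln (real n)\<rceil>))" unfolding cr by simp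
  finally show "real n \<le> exp (real (nat \<lceil>ln (real n)\<rceil>))" .
qed

lemma pow_mult_theta_pow_le:
  fixes q :: real
  assumes q: "2 \<le> q" and m: "k \<le> m"
  shows "q ^ k * (4 / (3 * q)) ^ m \<le> 2 ^ k * (2 / 3) ^ m"
proof -
  have mk: "m = k + (m - k)" using m by simp
  have pm: "(4 / (3 * q)) ^ m = (4 / (3 * q)) ^ k * (4 / (3 * q)) ^ (m - k)"
    using mk by (metis power_add)
  have "q ^ k * (4 / (3 * q)) ^ m = (q * (4 / (3 * q))) ^ k * (4 / (3 * q)) ^ (m - k)"
    unfolding pm power_mult_distrib by (simp add: mult.assoc)
  also have "\<dots> = (4 / 3) ^ k * (4 / (3 * q)) ^ (m - k)" using q by simp
  also have "\<dots> \<le> (4 / 3) ^ k * (2 / 3) ^ (m - k)"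
    using q by (intro mult_left_mono power_mono) (auto simp: field_simps)
  also have "\<dots> = 2 ^ k * (2 / 3) ^ m"
  proof -
    have p2: "((2::real) / 3) ^ m = (2 / 3) ^ k * (2 / 3) ^ (m - k)" using mk by (metis power_add)
    have "(4::real) / 3 = 2 * (2 / 3)" by simp
    then have "((4::real) / 3) ^ k = 2 ^ k * (2 / 3) ^ k" by (metis power_mult_distrib)
    then show ?thesis unfolding p2 by (simp add: mult.assoc)
  qed
  finally show ?thesis .
qed

lemma sq_mult_pow_le_three_halves_pow:
  fixes n k l c :: nat
  assumes c: "real n \<le> exp (real c)"
  shows "real n ^ 2 * 2 ^ k * 16 ^ l \<le> (3 / 2) ^ (8 * k + 8 * l + 6 * c)"
proof -
  have e2: "exp (2::real) \<le> (3 / 2) ^ 6"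
  proof -
    have "exp (2::real) = exp 1 ^ 2" by (simp add: exp_of_nat_mult[symmetric])
    also have "\<dots> \<le> 3 ^ 2" using exp_le by (intro power_mono) auto
    also have "(3::real) ^ 2 \<le> (3 / 2) ^ 6" by (simp add: power_divide)
    finally show ?thesis .
  qed
  have "real n ^ 2 \<le> exp (real c) ^ 2" using c by (intro power_mono) auto
  also have "\<dots> = exp 2 ^ c" by (simp add: exp_of_nat_mult[symmetric] power_mult[symmetric] mult.commute)
  also have "\<dots> \<le> ((3 / 2) ^ 6) ^ c" using e2 by (intro power_mono) auto
  finally have a: "real n ^ 2 \<le> ((3 / 2) ^ 6) ^ c" .
  have t16: "(16::real) \<le> (3 / 2) ^ 8" by (simp add: power_divide)
  have b: "(2::real) ^ k \<le> ((3 / 2) ^ 8) ^ k" using t16 by (intro power_mono) auto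
  have d: "(16::real) ^ l \<le> ((3 / 2) ^ 8) ^ l" using t16 by (intro power_mono) auto
  have "real n ^ 2 * 2 ^ k * 16 ^ l \<le> ((3 / 2) ^ 6) ^ c * ((3 / 2) ^ 8) ^ k * ((3 / 2) ^ 8) ^ l"
    using a b d by (intro mult_mono) auto
  also have "\<dots> = (3 / 2) ^ (8 * k + 8 * l + 6 * c)"
    by (simp add: power_add power_mult[symmetric] algebra_simps)
  finally show ?thesis .
qed

lemma sync_failure_arith:
  fixes q N :: real and n k l c m :: nat
  assumes n: "3 \<le> n" and q: "2 \<le> q" and N: "N \<le> q ^ k" "0 \<le> N" and m: "m = 8 * k + 8 * l + 6 * c"
    and c: "real n \<le> exp (real c)"
  shows "N * n * (16 ^ l * (4 / (3 * q)) ^ m) \<le> 1 / n"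
proof -
  have "N * n * (16 ^ l * (4 / (3 * q)) ^ m) \<le> q ^ k * n * (16 ^ l * (4 / (3 * q)) ^ m)"
    using N q by (intro mult_right_mono) auto
  also have "\<dots> = n * 16 ^ l * (q ^ k * (4 / (3 * q)) ^ m)" by (simp add: algebra_simps)
  also have "\<dots> \<le> n * 16 ^ l * (2 ^ k * (2 / 3) ^ m)" using pow_mult_theta_pow_le[OF q] m by (intro mult_left_mono) auto
  also have "\<dots> = (real n ^ 2 * 2 ^ k * 16 ^ l) * (2 / 3) ^ m / n" using n by (simp add: power2_eq_square field_simps)
  also have "\<dots> \<le> (3 / 2) ^ m * (2 / 3) ^ m / n" using sq_mult_pow_le_three_halves_pow[OF c, of k l] m n
    by (intro divide_right_mono mult_right_mono) auto
  also have "\<dots> = 1 / n" by (simp add: power_mult_distrib[symmetric])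
  finally show ?thesis .
qed

lemma async_failure_arith:
  fixes n k l c m T :: nat
  assumes n: "3 \<le> n" and m: "m = 8 * k + 8 * l + 6 * c"
    and c: "real n \<le> exp (real c)" and T: "2 * (16 * k + 20 * l + 15 * c) \<le> real T"
  shows "real n * n * (16 ^ l * 4 ^ m * (1 - 1 / (2 * n)) ^ (T * n)) \<le> 1 / n"
proof -
  have x: "(1 - 1 / (2 * real n)) ^ (T * n) \<le> exp (- real T / 2)"
  proof -
    have "0 \<le> 1 - 1 / (2 * real n)" using n by (simp add: field_simps)
    then have "(1 - 1 / (2 * real n)) ^ (T * n) \<le> exp (- (1 / (2 * real n))) ^ (T * n)"
      by (intro power_mono) (auto intro: exp_ge_add_one_self[THEN order_trans[rotated]] simp: exp_ge_add_one_self)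
    also have "\<dots> = exp (- real T / 2)" using n by (simp add: exp_of_nat_mult[symmetric] field_simps)
    finally show ?thesis .
  qed
  have e4: "(4::real) \<le> exp 2"
  proof -
    have "(2::real) \<le> exp 1" using exp_ge_add_one_self[of 1] by simp
    then have "(2::real) ^ 2 \<le> exp 1 ^ 2" by (intro power_mono) auto
    then show ?thesis by (simp add: exp_of_nat_mult[symmetric])
  qed
  have "real n ^ 3 * 16 ^ l * 4 ^ m \<le> exp (real c) ^ 3 * (exp 2 ^ 2) ^ l * exp 2 ^ m"
    using c n e4 power_mono[OF e4, of 2] by (intro mult_mono power_mono) auto
  also have "\<dots> = exp (3 * c + 4 * l + 2 * m)"
    by (simp add: exp_add exp_of_nat_mult[symmetric] power_mult[symmetric] mult.commute)
  also have "\<dots> \<le> exp (real T / 2)" using T m by simp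
  finally have b: "real n ^ 3 * 16 ^ l * 4 ^ m \<le> exp (real T / 2)" .
  have "real n * n * (16 ^ l * 4 ^ m * (1 - 1 / (2 * n)) ^ (T * n)) \<le> real n * n * (16 ^ l * 4 ^ m * exp (- real T / 2))"
    using x by (intro mult_left_mono) auto
  also have "\<dots> = (real n ^ 3 * 16 ^ l * 4 ^ m) * exp (- real T / 2) / n"
    using n by (simp add: power3_eq_cube field_simps)
  also have "\<dots> \<le> exp (real T / 2) * exp (- real T / 2) / n"
    using b by (intro divide_right_mono mult_right_mono) auto
  also have "\<dots> = 1 / n" by (simp add: exp_add[symmetric])
  finally show ?thesis .
qed

lemma prob_Collect_eq_1_minus_compl: "measure_pmf.prob p {x. P x} = 1 - measure_pmf.prob p {x. \<not> P x}"
proof -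
  have "measure_pmf.prob p (UNIV - {x. \<not> P x}) = 1 - measure_pmf.prob p {x. \<not> P x}"
    using measure_pmf.prob_compl[of "{x. \<not> P x}" p] by simp
  moreover have "UNIV - {x. \<not> P x} = {x. P x}" by auto
  ultimately show ?thesis by simp
qed

context tree_gossip
begin

lemma gossip_success_prob:
  assumes loc: "\<forall>i<k. loc i < n" and n3: "3 \<le> n"
    and T: "100 * (real k + ln (real n) + real (lmax n r par)) \<le> real T"
  shows "1 - 2 / real n \<le> measure_pmf.prob (pmf_iter (sync_step R k n r par) T (init_state R k loc))
      {st. all_learned R k n st}"
    and "1 - 2 / real n \<le> measure_pmf.prob (pmf_iter (async_step R k n r par) (T * n) (init_state R k loc))
      {st. all_learned R k n st}"
proof -
  define l where "l = lmax n r par"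
  define c where "c = nat \<lceil>ln (real n)\<rceil>"
  define m where "m = 8 * k + 8 * l + 6 * c"
  note c_bounds = ceiling_ln_bounds[OF n3, folded c_def]
  have "1 \<le> ln (real n)" using one_le_ln[OF n3] .
  then have T1: "2 * l + m \<le> T" and T2: "2 * (16 * k + 20 * l + 15 * c) \<le> real T"
    using T c_bounds by (simp_all add: m_def l_def)
  have sync_err: "real (card (nonzero_vecs k)) * n * (16 ^ l * theta ^ m) \<le> 1 / n"
    unfolding theta_def
    by (rule sync_failure_arith[OF n3 q_ge2 card_nonzero_vecs_le _ m_def c_bounds(2)]) simp
  have async_err: "real n * n * (16 ^ l * 4 ^ m * (1 - 1 / (2 * n)) ^ (T * n)) \<le> 1 / n"
    by (rule async_failure_arith[OF n3 m_def c_bounds(2) T2])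
  have "1 / real n \<le> 2 / real n" using n3 by (simp add: divide_right_mono)
  then show "1 - 2 / real n \<le> measure_pmf.prob (pmf_iter (sync_step R k n r par) T (init_state R k loc))
      {st. all_learned R k n st}"
    using sync_failure_prob_le[OF loc T1[unfolded l_def]] sync_err
    unfolding prob_Collect_eq_1_minus_compl[of _ "all_learned R k n"] l_def by linarith
  show "1 - 2 / real n \<le> measure_pmf.prob (pmf_iter (async_step R k n r par) (T * n) (init_state R k loc))
      {st. all_learned R k n st}"
    using async_failure_prob_le[OF loc, of "T * n" m] sync_err async_err
    unfolding prob_Collect_eq_1_minus_compl[of _ "all_learned R k n"] l_def by linarith
qed

end

theorem lemma1:
  "\<exists>C>0. \<forall>(R :: nat ring) n r par k loc.
     field R \<and> finite (carrier R) \<and> is_rooted_tree n r par \<and> (\<forall>i<k. loc i < n) \<longrightarrow>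
     (let T = nat \<lceil>C * (real k + ln (real n) + real (lmax n r par))\<rceil> in
        measure_pmf.prob (pmf_iter (sync_step R k n r par) T (init_state R k loc))
            {st. all_learned R k n st} \<ge> 1 - 2 / real n
      \<and> measure_pmf.prob (pmf_iter (async_step R k n r par) (T * n) (init_state R k loc))
            {st. all_learned R k n st} \<ge> 1 - 2 / real n)"
proof (intro exI[of _ "100::real"] conjI allI impI, simp)
  fix R :: "nat ring" and n r :: nat and par :: "nat \<Rightarrow> nat" and k :: nat and loc :: "nat \<Rightarrow> nat"
  assume H: "field R \<and> finite (carrier R) \<and> is_rooted_tree n r par \<and> (\<forall>i<k. loc i < n)"
  define T where "T = nat \<lceil>100 * (real k + ln (real n) + real (lmax n r par))\<rceil>"
  have "1 - 2 / real n \<le> measure_pmf.prob (pmf_iter (sync_step R k n r par) T (init_state R k loc))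
          {st. all_learned R k n st}
      \<and> 1 - 2 / real n \<le> measure_pmf.prob (pmf_iter (async_step R k n r par) (T * n) (init_state R k loc))
          {st. all_learned R k n st}"
  proof (cases "n \<le> 2")
    case True
    have "0 < n" using H by (auto simp: is_rooted_tree_def)
    with True have "1 - 2 / real n \<le> 0" by (simp add: field_simps)
    then show ?thesis by (meson measure_nonneg order_trans)
  next
    case False
    interpret tree_gossip R n r par
      using H by (simp add: tree_gossip_def tree_gossip_axioms_def finite_nat_field_def
          finite_nat_field_axioms_def nat_field_def)
    have "100 * (real k + ln (real n) + real (lmax n r par)) \<le> real T"
      unfolding T_def by (rule real_nat_ceiling_ge)
    then show ?thesis using gossip_success_prob[of k loc T] H False by simp
  qed
  then show "let T = nat \<lceil>100 * (real k + ln (real n) + real (lmax n r par))\<rceil> in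
      1 - 2 / real n \<le> measure_pmf.prob (pmf_iter (sync_step R k n r par) T (init_state R k loc))
          {st. all_learned R k n st}
      \<and> 1 - 2 / real n \<le> measure_pmf.prob (pmf_iter (async_step R k n r par) (T * n) (init_state R k loc))
          {st. all_learned R k n st}"
    unfolding Let_def T_def .
qed

end
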